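(* Let $k\ge2$, $m\ge1$, $N_1=n-mk\ge0$, $N_2=m$; let $\eta_1\in\mathbb C$ with $\hbar=k\eta_1$, $t_1=e^{\eta_1/2}$ (so $q=t_1^k$). Let $S_0=\bigsqcup_{\ell=1}^{N_2}\{e_{N_1+k(\ell-1)+j}-e_{N_1+k(\ell-1)+j+1}:1\le j\le k-1\}$, $\mathcal D_0=\{x: x_j-x_{j+1}=\eta_1$ whenever $e_j-e_{j+1}\in S_0\}$, with coordinates $x_1,\dots,x_{N_1}$ and $y_\ell=\frac1k\sum_{s=0}^{k-1}x_{N_1+k\ell-s}$. Then the restriction of the Koornwinder operator $M_{-e_1}$ to $\mathcal D_0$ is well defined and $$\overline{M_{-e_1}}=(t_0t_n)^{-1}\mathcal M_{N_1,N_2}+\kappa_t,$$ where $\mathcal M_{N_1,N_2}$ is the generalized Koornwinder operator with parameters $s=t_1$, $\xi=\eta_1$, $a=t_0u_0q^{-1}$, $b=-t_0u_0^{-1}q^{-1}$, $c=t_nu_n$, $d=-t_nu_n^{-1}$.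
   Context: $V=\mathbb C^n$, orthonormal basis $e_i$, coordinates $x_i$; $\hbar\in\mathbb C\setminus\pi i\mathbb Q$, $q=e^{\hbar/2}$; $t_0,t_1,t_n,u_0,u_n\in\mathbb C^*$. $g(z;a,b)=\frac{ae^z-a^{-1}}{be^z-b^{-1}}$; $\mathsf T^a_z$ is the shift $z\mapsto z+a$. Koornwinder operator: $M_{-e_1}=\sum_{i=1}^n\sum_{\epsilon=\pm1}(t_0t_n)^{-1}\prod_{j\ne i}g(\epsilon x_i-x_j;t_1,1)g(\epsilon x_i+x_j;t_1,1)\cdot\frac{(1-t_0u_0q^{-1}e^{\epsilon x_i})(1+t_0u_0^{-1}q^{-1}e^{\epsilon x_i})(1-t_nu_ne^{\epsilon x_i})(1+t_nu_n^{-1}e^{\epsilon x_i})}{(1-q^{-2}e^{2\epsilon x_i})(1-e^{2\epsilon x_i})}(\mathsf T^{-\epsilon\hbar}_{x_i}-1)+\kappa_t$, with $\kappa_t=\frac{t_1^n-t_1^{-n}}{t_1-t_1^{-1}}(t_0t_nt_1^{n-1}+t_0^{-1}t_n^{-1}t_1^{1-n})$. Generalized Koornwinder operator, acting on functions of $x_1..x_{N_1},y_1..y_{N_2}$ with parameters $\hbar,\xi,a,b,c,d$, $q=e^{\hbar/2}$, $s=e^{\xi/2}$: $\mathcal M_{N_1,N_2}=\sum_{i\le N_1,\epsilon=\pm1}A_i^\epsilon(\mathsf T^{-\epsilon\hbar}_{x_i}-1)+\frac{1-q^{-2}}{1-s^{-2}}\sum_{\ell\le N_2,\epsilon=\pm1}B_\ell^\epsilon(\mathsf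 T^{-\epsilon\xi}_{y_\ell}-1)$, where $A_i^\epsilon=\prod_{j\ne i}g(\epsilon x_i-x_j;s,1)g(\epsilon x_i+x_j;s,1)\prod_{\ell'}g(\epsilon x_i-y_{\ell'};q^{1/2}s^{1/2},q^{-1/2}s^{1/2})g(\epsilon x_i+y_{\ell'};q^{1/2}s^{1/2},q^{-1/2}s^{1/2})\frac{(1-ae^{\epsilon x_i})(1-be^{\epsilon x_i})(1-ce^{\epsilon x_i})(1-de^{\epsilon x_i})}{(1-q^{-2}e^{2\epsilon x_i})(1-e^{2\epsilon x_i})}$, $B_\ell^\epsilon=\prod_{j}g(\epsilon y_\ell-x_j;q^{1/2}s^{1/2},q^{1/2}s^{-1/2})g(\epsilon y_\ell+x_j;q^{1/2}s^{1/2},q^{1/2}s^{-1/2})\prod_{\ell'\ne\ell}g(\epsilon y_\ell-y_{\ell'};q,1)g(\epsilon y_\ell+y_{\ell'};q,1)\frac{\prod_{p\in\{a,b,c,d\}}(1-pqs^{-1}e^{\epsilon y_\ell})}{(1-s^{-2}e^{2\epsilon y_\ell})(1-e^{2\epsilon y_\ell})}$. Restriction: writing $\mathsf T^{-\epsilon\hbar}_{x_i}=\tau(\epsilon e_i)$ with $(\tau(\lambda)f)(x)=f(x-\hbar\lambda)$, an operator $D=\sum_\lambda g_\lambda\tau(\lambda)$ restricts to $\overline D=\sum_{\lambda'}\big(\sum_{\bar\lambda=\lambda'}g_\lambda\big)|_{\mathcal D_0}\tau(\lambda')$, where $\bar\lambda$ is the orthogonal projection onto $\overline V=\{x:(\alpha,x)=0\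 \forall\alpha\in S_0\}$, provided each restricted coefficient is a well-defined meromorphic function on $\mathcal D_0$. *)

theory Defs
  imports Complex_Main
begin

definition g :: "complex \<Rightarrow> complex \<Rightarrow> complex \<Rightarrow> complex" where
  "g z a b = (a * exp z - inverse a) / (b * exp z - inverse b)"

definition gden :: "complex \<Rightarrow> complex \<Rightarrow> complex" where
  "gden z b = b * exp z - inverse b"

text \<open>Vector c e_i (indices are 1-based; vectors are functions on nat).\<close>
definition unitv :: "nat \<Rightarrow> 'a::zero \<Rightarrow> nat \<Rightarrow> 'a" where
  "unitv i c = (\<lambda>j. if j = i then c else 0)"

text \<open>A difference operator D = sum_lam g_lam tau(lam) on C^n is represented by its
  coefficient map  D :: shift vector (nat => real, supported in 1..n) => point => complex,
  together with a finite support set of shift vectors; (tau(lam) f)(x) = f(x - hbar lam).\<close>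

definition ip :: "nat \<Rightarrow> (nat \<Rightarrow> real) \<Rightarrow> (nat \<Rightarrow> real) \<Rightarrow> real" where
  "ip n \<alpha> \<mu> = (\<Sum>j=1..n. \<alpha> j * \<mu> j)"

definition Vbar :: "nat \<Rightarrow> (nat \<Rightarrow> real) set \<Rightarrow> (nat \<Rightarrow> real) set" where
  "Vbar n S0 = {\<mu>. (\<forall>j. j \<notin> {1..n} \<longrightarrow> \<mu> j = 0) \<and> (\<forall>\<alpha>\<in>S0. ip n \<alpha> \<mu> = 0)}"

definition proj :: "nat \<Rightarrow> (nat \<Rightarrow> real) set \<Rightarrow> (nat \<Rightarrow> real) \<Rightarrow> (nat \<Rightarrow> real)" where
  "proj n S0 lam = (THE \<mu>. \<mu> \<in> Vbar n S0 \<and>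
      (\<exists>c. \<forall>j. lam j - \<mu> j = (\<Sum>\<alpha>\<in>S0. c \<alpha> * \<alpha> j)))"

text \<open>Coefficient of tau(lam') in the restricted operator (before restriction of the point).\<close>
definition restrict_coeff ::
  "nat \<Rightarrow> (nat \<Rightarrow> real) set \<Rightarrow> (nat \<Rightarrow> real) set \<Rightarrow>
   ((nat \<Rightarrow> real) \<Rightarrow> (nat \<Rightarrow> complex) \<Rightarrow> complex) \<Rightarrow>
   (nat \<Rightarrow> real) \<Rightarrow> (nat \<Rightarrow> complex) \<Rightarrow> complex" where
  "restrict_coeff n S0 supp D lam' x = (\<Sum>lam\<in>{lam\<in>supp. proj n S0 lam = lam'}. D lam x)"

definition koorn_C ::
  "nat \<Rightarrow> complex \<Rightarrow> complex \<Rightarrow> complex \<Rightarrow> complex \<Rightarrow> complex \<Rightarrow> complex \<Rightarrow>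
   nat \<Rightarrow> real \<Rightarrow> (nat \<Rightarrow> complex) \<Rightarrow> complex" where
  "koorn_C n hb t0 t1 tn u0 un i \<epsilon> x =
    (let q = exp (hb / 2); e = complex_of_real \<epsilon>; X = exp (e * x i) in
     inverse (t0 * tn) *
     (\<Prod>j\<in>{1..n} - {i}. g (e * x i - x j) t1 1 * g (e * x i + x j) t1 1) *
     ((1 - t0 * u0 * inverse q * X) * (1 + t0 * inverse u0 * inverse q * X) *
      (1 - tn * un * X) * (1 + tn * inverse un * X)) /
     ((1 - (inverse q)^2 * exp (2 * e * x i)) * (1 - exp (2 * e * x i))))"

definition kappa_t :: "nat \<Rightarrow> complex \<Rightarrow> complex \<Rightarrow> complex \<Rightarrow> complex" where
  "kappa_t n t0 t1 tn =
     (t1 ^ n - (inverse t1) ^ n) / (t1 - inverse t1) *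
     (t0 * tn * t1 ^ (n - 1) + inverse t0 * inverse tn * (inverse t1) ^ (n - 1))"

text \<open>Coefficient map of M_{-e_1} = sum_{i,eps} C_i^eps (tau(eps e_i) - 1) + kappa_t.\<close>
definition koorn_op ::
  "nat \<Rightarrow> complex \<Rightarrow> complex \<Rightarrow> complex \<Rightarrow> complex \<Rightarrow> complex \<Rightarrow> complex \<Rightarrow>
   (nat \<Rightarrow> real) \<Rightarrow> (nat \<Rightarrow> complex) \<Rightarrow> complex" where
  "koorn_op n hb t0 t1 tn u0 un lam x =
     (\<Sum>i\<in>{1..n}. \<Sum>\<epsilon>\<in>{1,-1}.
        if lam = unitv i \<epsilon> then koorn_C n hb t0 t1 tn u0 un i \<epsilon> x else 0) +
     (if lam = (\<lambda>_. 0) then kappa_t n t0 t1 tn -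
        (\<Sum>i\<in>{1..n}. \<Sum>\<epsilon>\<in>{1,-1}. koorn_C n hb t0 t1 tn u0 un i \<epsilon> x) else 0)"

definition koorn_supp :: "nat \<Rightarrow> (nat \<Rightarrow> real) set" where
  "koorn_supp n = {unitv i \<epsilon> | i \<epsilon>. i \<in> {1..n} \<and> \<epsilon> \<in> {1, -1}} \<union> {\<lambda>_. 0}"

definition koorn_regular :: "nat \<Rightarrow> complex \<Rightarrow> (nat \<Rightarrow> complex) \<Rightarrow> bool" where
  "koorn_regular n hb x =
     (\<forall>i\<in>{1..n}. \<forall>\<epsilon>\<in>{1, -1::real}. let e = complex_of_real \<epsilon>; q = exp (hb / 2) in
        (\<forall>j\<in>{1..n} - {i}. gden (e * x i - x j) 1 \<noteq> 0 \<and> gden (e * x i + x j) 1 \<noteq> 0) \<and>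
        1 - (inverse q)^2 * exp (2 * e * x i) \<noteq> 0 \<and> 1 - exp (2 * e * x i) \<noteq> 0)"

text \<open>Functions of (x_1..x_N1, y_1..y_N2) are represented as functions of z :: nat => complex
  with x_i = z i (1 <= i <= N1) and y_l = z (N1 + l) (1 <= l <= N2).
  q^{1/2} = exp(hbar/4), s^{1/2} = exp(xi/4).\<close>

definition gk_A ::
  "nat \<Rightarrow> nat \<Rightarrow> complex \<Rightarrow> complex \<Rightarrow> complex \<Rightarrow> complex \<Rightarrow> complex \<Rightarrow> complex \<Rightarrow>
   nat \<Rightarrow> real \<Rightarrow> (nat \<Rightarrow> complex) \<Rightarrow> complex" where
  "gk_A N1 N2 hb xi a b c d i \<epsilon> z =
    (let q = exp (hb / 2); s = exp (xi / 2); qh = exp (hb / 4); sh = exp (xi / 4);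
         e = complex_of_real \<epsilon>; X = exp (e * z i) in
     (\<Prod>j\<in>{1..N1} - {i}. g (e * z i - z j) s 1 * g (e * z i + z j) s 1) *
     (\<Prod>l\<in>{1..N2}. g (e * z i - z (N1 + l)) (qh * sh) (inverse qh * sh) *
                    g (e * z i + z (N1 + l)) (qh * sh) (inverse qh * sh)) *
     ((1 - a * X) * (1 - b * X) * (1 - c * X) * (1 - d * X)) /
     ((1 - (inverse q)^2 * exp (2 * e * z i)) * (1 - exp (2 * e * z i))))"

definition gk_B ::
  "nat \<Rightarrow> nat \<Rightarrow> complex \<Rightarrow> complex \<Rightarrow> complex \<Rightarrow> complex \<Rightarrow> complex \<Rightarrow> complex \<Rightarrow>
   nat \<Rightarrow> real \<Rightarrow> (nat \<Rightarrow> complex) \<Rightarrow> complex" where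
  "gk_B N1 N2 hb xi a b c d l \<epsilon> z =
    (let q = exp (hb / 2); s = exp (xi / 2); qh = exp (hb / 4); sh = exp (xi / 4);
         e = complex_of_real \<epsilon>; y = z (N1 + l); Y = exp (e * y) in
     (\<Prod>j\<in>{1..N1}. g (e * y - z j) (qh * sh) (qh * inverse sh) *
                   g (e * y + z j) (qh * sh) (qh * inverse sh)) *
     (\<Prod>l'\<in>{1..N2} - {l}. g (e * y - z (N1 + l')) q 1 * g (e * y + z (N1 + l')) q 1) *
     ((1 - a * q * inverse s * Y) * (1 - b * q * inverse s * Y) *
      (1 - c * q * inverse s * Y) * (1 - d * q * inverse s * Y)) /
     ((1 - (inverse s)^2 * exp (2 * e * y)) * (1 - exp (2 * e * y))))"

text \<open>Coefficient map of M_{N1,N2}, indexed by the displacement delta of the argument: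
  the term  h(z) f(z - delta).  So T^{-eps hbar}_{x_i} has delta = eps hbar e_i and
  T^{-eps xi}_{y_l} has delta = eps xi e_{N1+l}.\<close>
definition gk_op ::
  "nat \<Rightarrow> nat \<Rightarrow> complex \<Rightarrow> complex \<Rightarrow> complex \<Rightarrow> complex \<Rightarrow> complex \<Rightarrow> complex \<Rightarrow>
   (nat \<Rightarrow> complex) \<Rightarrow> (nat \<Rightarrow> complex) \<Rightarrow> complex" where
  "gk_op N1 N2 hb xi a b c d \<delta> z =
    (let cB = (1 - (inverse (exp (hb / 2)))^2) / (1 - (inverse (exp (xi / 2)))^2) in
     (\<Sum>i\<in>{1..N1}. \<Sum>\<epsilon>\<in>{1,-1}.
        if \<delta> = unitv i (complex_of_real \<epsilon> * hb) then gk_A N1 N2 hb xi a b c d i \<epsilon> z else 0) +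
     (\<Sum>l\<in>{1..N2}. \<Sum>\<epsilon>\<in>{1,-1}.
        if \<delta> = unitv (N1 + l) (complex_of_real \<epsilon> * xi) then cB * gk_B N1 N2 hb xi a b c d l \<epsilon> z else 0) +
     (if \<delta> = (\<lambda>_. 0) then
        - (\<Sum>i\<in>{1..N1}. \<Sum>\<epsilon>\<in>{1,-1}. gk_A N1 N2 hb xi a b c d i \<epsilon> z)
        - cB * (\<Sum>l\<in>{1..N2}. \<Sum>\<epsilon>\<in>{1,-1}. gk_B N1 N2 hb xi a b c d l \<epsilon> z)
      else 0))"

definition gk_regular :: "nat \<Rightarrow> nat \<Rightarrow> complex \<Rightarrow> complex \<Rightarrow> (nat \<Rightarrow> complex) \<Rightarrow> bool" where
  "gk_regular N1 N2 hb xi z =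
    (let q = exp (hb / 2); s = exp (xi / 2); qh = exp (hb / 4); sh = exp (xi / 4) in
     (\<forall>i\<in>{1..N1}. \<forall>\<epsilon>\<in>{1, -1::real}. let e = complex_of_real \<epsilon> in
        (\<forall>j\<in>{1..N1} - {i}. gden (e * z i - z j) 1 \<noteq> 0 \<and> gden (e * z i + z j) 1 \<noteq> 0) \<and>
        (\<forall>l\<in>{1..N2}. gden (e * z i - z (N1 + l)) (inverse qh * sh) \<noteq> 0 \<and>
                     gden (e * z i + z (N1 + l)) (inverse qh * sh) \<noteq> 0) \<and>
        1 - (inverse q)^2 * exp (2 * e * z i) \<noteq> 0 \<and> 1 - exp (2 * e * z i) \<noteq> 0) \<and>
     (\<forall>l\<in>{1..N2}. \<forall>\<epsilon>\<in>{1, -1::real}. let e = complex_of_real \<epsilon>; y = z (N1 + l) in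
        (\<forall>j\<in>{1..N1}. gden (e * y - z j) (qh * inverse sh) \<noteq> 0 \<and>
                     gden (e * y + z j) (qh * inverse sh) \<noteq> 0) \<and>
        (\<forall>l'\<in>{1..N2} - {l}. gden (e * y - z (N1 + l')) 1 \<noteq> 0 \<and> gden (e * y + z (N1 + l')) 1 \<noteq> 0) \<and>
        1 - (inverse s)^2 * exp (2 * e * y) \<noteq> 0 \<and> 1 - exp (2 * e * y) \<noteq> 0))"

definition simple_root :: "nat \<Rightarrow> nat \<Rightarrow> real" where
  "simple_root p = (\<lambda>j. if j = p then 1 else if j = Suc p then -1 else 0)"

definition S0_blocks :: "nat \<Rightarrow> nat \<Rightarrow> nat \<Rightarrow> (nat \<Rightarrow> real) set" where
  "S0_blocks N1 k N2 = {simple_root (N1 + k * (l - 1) + j) | l j. l \<in> {1..N2} \<and> j \<in> {1..k - 1}}"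

definition D0 :: "nat \<Rightarrow> (nat \<Rightarrow> real) set \<Rightarrow> complex \<Rightarrow> (nat \<Rightarrow> complex) set" where
  "D0 n S0 \<eta>1 = {x. (\<forall>j. j \<notin> {1..n} \<longrightarrow> x j = 0) \<and>
                    (\<forall>p. simple_root p \<in> S0 \<longrightarrow> x p - x (Suc p) = \<eta>1)}"

definition coordmap :: "nat \<Rightarrow> nat \<Rightarrow> nat \<Rightarrow> (nat \<Rightarrow> complex) \<Rightarrow> nat \<Rightarrow> complex" where
  "coordmap N1 k N2 x = (\<lambda>i.
     if 1 \<le> i \<and> i \<le> N1 then x i
     else if N1 < i \<and> i \<le> N1 + N2 then (1 / of_nat k) * (\<Sum>s<k. x (N1 + k * (i - N1) - s))
     else 0)"

end

theory Submission
  imports Defs "HOL-Analysis.Complex_Transcendental"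
begin

text \<open>
  Restriction of the Koornwinder operator M_(-e_1) to the subspace D0 on which the sites
  N1 + 1, ..., n form m strings x_(b+r+1) = x_(b+1) - r eta (r < k) of length k.

  The restriction is computed coefficient by coefficient.
  (1) Analytic core: along a string the factors g(.; t1, 1) telescope.  Hence a string seen
      from an outside point acts like the single variable y at its centre with the
      parameters of the generalized operator, and the rest of a string seen from its end
      point produces the constant c_B = (1 - q^-2)/(1 - s^-2).
  (2) Combinatorics of the shifts: a unit shift at a free site projects to itself, a unit
      shift at a site of block L projects to the average of block L (uniqueness of the
      orthogonal decomposition), and these projections are recognised by their
      displacement in the coordinates (x, y).
  (3) Coefficients: a free site gives (t0 tn)^-1 A_i; within a string all coefficients
      vanish except the one at the end point facing the shift direction, which gives
      (t0 tn)^-1 c_B B_l.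
  (4) Summing the coefficients with equal projection yields the formula of the theorem.
  (5) Regular points are dense in D0: moving every variable with its own speed makes all
      denominators nonzero for small times, by genericity of eta.
\<close>

section \<open>Non-resonance and telescoping products of g\<close>

text \<open>Genericity of hbar = k eta outside i pi Q: no nonzero integer multiple of eta is a period
  of exp.  This is what keeps the string products and the regular points under control.\<close>
lemma exp_int_mult_ne_1:
  fixes hb \<eta> :: complex and k :: nat and d :: int
  assumes hb_not_rational: "\<forall>r\<in>(\<rat>::real set). hb \<noteq> \<i> * complex_of_real (pi * r)"
    and hb_eq: "hb = of_nat k * \<eta>" and d: "d \<noteq> 0"
  shows "exp (of_int d * \<eta>) \<noteq> 1"
proof
  assume "exp (of_int d * \<eta>) = 1"
  then obtain j :: int where re: "Re (of_int d * \<eta>) = 0"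
      and im: "Im (of_int d * \<eta>) = real_of_int (2 * j) * pi"
    by (auto simp: exp_eq_1)
  have re_eta: "Re \<eta> = 0" using re d by simp
  have im_eta: "Im \<eta> = real_of_int (2 * j) * pi / real_of_int d" using im d by (simp add: field_simps)
  define r where "r = real_of_int (2 * j * int k) / real_of_int d"
  have "r \<in> \<rat>" unfolding r_def by (intro Rats_divide Rats_of_int)
  moreover have "hb = \<i> * complex_of_real (pi * r)"
    by (rule complex_eqI) (simp_all add: hb_eq re_eta im_eta r_def field_simps)
  ultimately show False using hb_not_rational by blast
qed

lemma g_shift_step:
  fixes z \<eta> :: complex
  assumes "exp z \<noteq> 1"
  shows "g z (exp (\<eta>/2)) 1 * (exp z - 1) = inverse (exp (\<eta>/2)) * (exp (z + \<eta>) - 1)"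
proof -
  have "z + \<eta> = z + \<eta>/2 + \<eta>/2" by simp
  then have "exp (z + \<eta>) = exp z * exp (\<eta>/2) * exp (\<eta>/2)"
    by (simp only: exp_add)
  moreover have "exp z - 1 \<noteq> 0" using assms by simp
  ultimately show ?thesis unfolding g_def by (simp add: field_simps)
qed

lemma g_telescope:
  fixes w \<eta> :: complex
  assumes "\<And>j. j < K \<Longrightarrow> exp (w + of_nat j * \<eta>) \<noteq> 1"
  shows "(\<Prod>j<K. g (w + of_nat j * \<eta>) (exp (\<eta>/2)) 1) * (exp w - 1)
         = inverse (exp (\<eta>/2)) ^ K * (exp (w + of_nat K * \<eta>) - 1)"
  using assms
proof (induction K)
  case 0
  then show ?case by simp
next
  case (Suc K)
  define T where "T = exp (\<eta>/2)"
  define w' where "w' = w + of_nat K * \<eta>"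
  have IH: "(\<Prod>j<K. g (w + of_nat j * \<eta>) T 1) * (exp w - 1) = inverse T ^ K * (exp w' - 1)"
    using Suc by (simp add: T_def w'_def)
  have step: "g w' T 1 * (exp w' - 1) = inverse T * (exp (w' + \<eta>) - 1)"
    unfolding T_def by (rule g_shift_step) (use Suc.prems in \<open>simp add: w'_def\<close>)
  have "(\<Prod>j<Suc K. g (w + of_nat j * \<eta>) T 1) * (exp w - 1)
      = g w' T 1 * ((\<Prod>j<K. g (w + of_nat j * \<eta>) T 1) * (exp w - 1))"
    by (simp add: w'_def ac_simps)
  also have "\<dots> = g w' T 1 * (inverse T ^ K * (exp w' - 1))"
    by (simp only: IH)
  also have "\<dots> = inverse T ^ K * (g w' T 1 * (exp w' - 1))"
    by (simp add: ac_simps)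
  also have "\<dots> = inverse T ^ Suc K * (exp (w' + \<eta>) - 1)"
    by (simp only: step power_Suc ac_simps)
  also have "w' + \<eta> = w + of_nat (Suc K) * \<eta>"
    by (simp add: w'_def algebra_simps)
  finally show ?case by (simp add: T_def)
qed

lemma g_telescope_rev:
  fixes w \<eta> :: complex
  assumes nz: "\<And>j. j < K \<Longrightarrow> exp (w - of_nat (Suc j) * \<eta>) \<noteq> 1"
  shows "(\<Prod>j<K. g (w - of_nat (Suc j) * \<eta>) (exp (\<eta>/2)) 1) * (exp (w - of_nat K * \<eta>) - 1)
         = inverse (exp (\<eta>/2)) ^ K * (exp w - 1)"
proof -
  define w0 where "w0 = w - of_nat K * \<eta>"
  have shift: "w - of_nat (Suc (K - Suc j)) * \<eta> = w0 + of_nat j * \<eta>" if "j < K" for j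
    using that by (simp add: w0_def of_nat_diff algebra_simps)
  have "(\<Prod>j<K. g (w - of_nat (Suc j) * \<eta>) (exp (\<eta>/2)) 1)
      = (\<Prod>j<K. g (w - of_nat (Suc (K - Suc j)) * \<eta>) (exp (\<eta>/2)) 1)"
    by (rule prod.nat_diff_reindex[symmetric])
  also have "\<dots> = (\<Prod>j<K. g (w0 + of_nat j * \<eta>) (exp (\<eta>/2)) 1)"
    by (intro prod.cong refl) (simp only: lessThan_iff shift)
  finally have reindex: "(\<Prod>j<K. g (w - of_nat (Suc j) * \<eta>) (exp (\<eta>/2)) 1)
      = (\<Prod>j<K. g (w0 + of_nat j * \<eta>) (exp (\<eta>/2)) 1)" .
  have "exp (w0 + of_nat j * \<eta>) \<noteq> 1" if "j < K" for j
    using nz[of "K - Suc j"] that by (simp add: shift[symmetric])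
  then show ?thesis
    using g_telescope[of K w0 \<eta>] unfolding reindex by (simp add: w0_def)
qed

lemma exp_numeral_mult: "exp (numeral j * z) = exp (z::complex) ^ numeral j"
  using exp_of_nat_mult[of "numeral j" z] by simp

lemma exp_quarter_powers:
  fixes \<eta> hb w :: complex and k :: nat
  assumes hb_eq: "hb = of_nat k * \<eta>"
  shows "exp (hb/4) = exp (\<eta>/4) ^ k"
    and "exp (hb/2) = (exp (\<eta>/4) ^ k)^2"
    and "exp (\<eta>/2) = exp (\<eta>/4) ^ 2"
    and "exp (w + (of_nat k - 1) * \<eta> / 2) = exp w * (exp (\<eta>/4) ^ k)^2 / exp (\<eta>/4) ^ 2"
    and "exp (w - (of_nat k - 1) * \<eta> / 2) = exp w * exp (\<eta>/4) ^ 2 / (exp (\<eta>/4) ^ k)^2"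
    and "exp (w + of_nat k * \<eta>) = exp w * (exp (\<eta>/4) ^ k) ^ 4"
proof -
  have a: "exp (of_nat k * (\<eta>/4)) = exp (\<eta>/4) ^ k" by (rule exp_of_nat_mult)
  show h4: "exp (hb/4) = exp (\<eta>/4) ^ k" using a by (simp add: hb_eq)
  have "exp (hb/2) = exp (2 * (hb/4))" by simp
  also have "\<dots> = exp (hb/4) ^ 2" by (rule exp_numeral_mult)
  finally show "exp (hb/2) = (exp (\<eta>/4) ^ k)^2" using h4 by simp
  have "exp (\<eta>/2) = exp (2 * (\<eta>/4))" by simp
  also have "\<dots> = exp (\<eta>/4) ^ 2" by (rule exp_numeral_mult)
  finally show "exp (\<eta>/2) = exp (\<eta>/4) ^ 2" .
  have b: "exp (2 * (of_nat k * (\<eta>/4))) = (exp (\<eta>/4) ^ k)^2"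
    by (simp only: exp_numeral_mult a)
  have c: "exp (2 * (\<eta>/4)) = exp (\<eta>/4) ^ 2" by (rule exp_numeral_mult)
  have "w + (of_nat k - 1) * \<eta> / 2 = w + 2 * (of_nat k * (\<eta>/4)) - 2 * (\<eta>/4)"
    by (simp add: field_simps)
  then show "exp (w + (of_nat k - 1) * \<eta> / 2) = exp w * (exp (\<eta>/4) ^ k)^2 / exp (\<eta>/4) ^ 2"
    by (simp only: exp_diff exp_add b c)
  have "w - (of_nat k - 1) * \<eta> / 2 = w + 2 * (\<eta>/4) - 2 * (of_nat k * (\<eta>/4))"
    by (simp add: field_simps)
  then show "exp (w - (of_nat k - 1) * \<eta> / 2) = exp w * exp (\<eta>/4) ^ 2 / (exp (\<eta>/4) ^ k)^2"
    by (simp only: exp_diff exp_add b c)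
  have d: "exp (4 * (of_nat k * (\<eta>/4))) = (exp (\<eta>/4) ^ k)^4"
    by (simp only: exp_numeral_mult a)
  have "w + of_nat k * \<eta> = w + 4 * (of_nat k * (\<eta>/4))" by simp
  then show "exp (w + of_nat k * \<eta>) = exp w * (exp (\<eta>/4) ^ k) ^ 4"
    by (simp only: exp_add d)
qed

text \<open>The x-y interaction g(.; q^(1/2) s^(1/2), q^(-1/2) s^(1/2)) of A telescopes like a string of
  length k of factors g(.; s, 1).\<close>
lemma g_xy_param_telescope:
  fixes \<eta> hb w :: complex and k :: nat
  assumes hb_eq: "hb = of_nat k * \<eta>" and w: "exp w \<noteq> 1"
  shows "g (w + (of_nat k - 1) * \<eta> / 2) (exp (hb/4) * exp (\<eta>/4)) (inverse (exp (hb/4)) * exp (\<eta>/4))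
          * (exp w - 1) = inverse (exp (\<eta>/2)) ^ k * (exp (w + of_nat k * \<eta>) - 1)"
proof -
  note ef = exp_quarter_powers[OF hb_eq]
  define S where "S = exp (\<eta>/4)"
  define K where "K = S ^ k"
  define X where "X = exp w"
  have S0: "S \<noteq> 0" and K0: "K \<noteq> 0" unfolding K_def S_def by simp_all
  have X1: "X - 1 \<noteq> 0" using w X_def by simp
  have ik: "inverse (S^2) ^ k = inverse K ^ 2"
    by (simp add: K_def power_mult[symmetric] mult.commute power_inverse)
  have den: "inverse K * S * (X * K^2 / S^2) - inverse (inverse K * S) = K * (X - 1) / S"
    using S0 K0 by (simp add: field_simps power2_eq_square)
  have den0: "K * (X - 1) / S \<noteq> 0" using S0 K0 X1 by simp
  show ?thesis
    unfolding g_def ef(1,3,4,6) S_def[symmetric] K_def[symmetric] X_def[symmetric] ik den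
    using S0 K0 X1 den0 by (simp add: field_simps, algebra)
qed

text \<open>The y-x interaction g(.; q^(1/2) s^(1/2), q^(1/2) s^(-1/2)) of B, seen from the shifted centre,
  is a single factor g(.; s, 1).\<close>
lemma g_yx_param_shift:
  fixes \<eta> hb w :: complex and k :: nat
  assumes hb_eq: "hb = of_nat k * \<eta>" and w: "exp w \<noteq> 1"
  shows "g (w - (of_nat k - 1) * \<eta> / 2) (exp (hb/4) * exp (\<eta>/4)) (exp (hb/4) * inverse (exp (\<eta>/4)))
          = g w (exp (\<eta>/2)) 1"
proof -
  note ef = exp_quarter_powers[OF hb_eq]
  define S where "S = exp (\<eta>/4)"
  define K where "K = S ^ k"
  define X where "X = exp w"
  have S0: "S \<noteq> 0" and K0: "K \<noteq> 0" unfolding K_def S_def by simp_all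
  have X1: "X - 1 \<noteq> 0" using w X_def by simp
  have den: "K * inverse S * (X * S^2 / K^2) - inverse (K * inverse S) = S * (X - 1) / K"
    using S0 K0 by (simp add: field_simps power2_eq_square)
  have den0: "S * (X - 1) / K \<noteq> 0" using S0 K0 X1 by simp
  show ?thesis
    unfolding g_def ef(1,3,5) S_def[symmetric] K_def[symmetric] X_def[symmetric] den
    using S0 K0 X1 den0 by (simp add: field_simps, algebra)
qed

text \<open>The y-y interaction g(.; q, 1) of B telescopes like a string of length k.\<close>
lemma g_q_telescope:
  fixes \<eta> hb w :: complex and k :: nat
  assumes hb_eq: "hb = of_nat k * \<eta>" and w: "exp w \<noteq> 1"
  shows "g w (exp (hb/2)) 1 * (exp w - 1) = inverse (exp (\<eta>/2)) ^ k * (exp (w + of_nat k * \<eta>) - 1)"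
proof -
  note ef = exp_quarter_powers[OF hb_eq]
  define S where "S = exp (\<eta>/4)"
  define K where "K = S ^ k"
  define X where "X = exp w"
  have S0: "S \<noteq> 0" and K0: "K \<noteq> 0" unfolding K_def S_def by simp_all
  have X1: "X - 1 \<noteq> 0" using w X_def by simp
  have ik: "inverse (S^2) ^ k = inverse K ^ 2"
    by (simp add: K_def power_mult[symmetric] mult.commute power_inverse)
  show ?thesis
    unfolding g_def ef(2,3,6) S_def[symmetric] K_def[symmetric] X_def[symmetric] ik
    using S0 K0 X1 by (simp add: field_simps)
qed

section \<open>Strings\<close>

lemma string_telescope:
  fixes u v \<eta> :: complex and xs :: "nat \<Rightarrow> complex"
  assumes string: "\<forall>r<k. xs r = v - of_nat r * \<eta>"
    and nz_minus: "\<forall>r<k. exp (u - xs r) \<noteq> 1"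
    and nz_plus: "\<forall>r<k. exp (u + xs r) \<noteq> 1"
  shows "(\<Prod>r<k. g (u - xs r) (exp (\<eta>/2)) 1) * (exp (u - v) - 1)
           = inverse (exp (\<eta>/2)) ^ k * (exp (u - v + of_nat k * \<eta>) - 1)"
    and "(\<Prod>r<k. g (u + xs r) (exp (\<eta>/2)) 1) * (exp (u + v - (of_nat k - 1) * \<eta>) - 1)
           = inverse (exp (\<eta>/2)) ^ k * (exp (u + v + \<eta>) - 1)"
proof -
  have minus: "u - xs r = (u - v) + of_nat r * \<eta>" if "r < k" for r
    using string[rule_format, OF that] by simp
  have "(\<Prod>r<k. g (u - xs r) (exp (\<eta>/2)) 1) = (\<Prod>r<k. g ((u - v) + of_nat r * \<eta>) (exp (\<eta>/2)) 1)"
    by (intro prod.cong refl) (simp only: lessThan_iff minus)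
  moreover have "exp ((u - v) + of_nat r * \<eta>) \<noteq> 1" if "r < k" for r
    using nz_minus[rule_format, OF that] minus[OF that] by simp
  ultimately show "(\<Prod>r<k. g (u - xs r) (exp (\<eta>/2)) 1) * (exp (u - v) - 1)
      = inverse (exp (\<eta>/2)) ^ k * (exp (u - v + of_nat k * \<eta>) - 1)"
    using g_telescope[of k "u - v" \<eta>] by simp
  have plus: "u + xs r = (u + v + \<eta>) - of_nat (Suc r) * \<eta>" if "r < k" for r
    using string[rule_format, OF that] by (simp add: algebra_simps)
  have reindex: "(\<Prod>r<k. g (u + xs r) (exp (\<eta>/2)) 1)
      = (\<Prod>r<k. g ((u + v + \<eta>) - of_nat (Suc r) * \<eta>) (exp (\<eta>/2)) 1)"
    by (intro prod.cong refl) (simp only: lessThan_iff plus)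
  have "exp ((u + v + \<eta>) - of_nat (Suc r) * \<eta>) \<noteq> 1" if "r < k" for r
    using nz_plus[rule_format, OF that] plus[OF that] by simp
  moreover have "u + v + \<eta> - of_nat k * \<eta> = u + v - (of_nat k - 1) * \<eta>"
    by (simp add: algebra_simps)
  ultimately show "(\<Prod>r<k. g (u + xs r) (exp (\<eta>/2)) 1) * (exp (u + v - (of_nat k - 1) * \<eta>) - 1)
      = inverse (exp (\<eta>/2)) ^ k * (exp (u + v + \<eta>) - 1)"
    unfolding reindex using g_telescope_rev[of k "u + v + \<eta>" \<eta>] by metis
qed

text \<open>Regularity at the two ends of a string, needed to divide by the telescoped factors.\<close>
lemma string_ends_regular:
  fixes u v \<eta> :: complex and xs :: "nat \<Rightarrow> complex"
  assumes k: "k \<ge> 1"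
    and string: "\<forall>r<k. xs r = v - of_nat r * \<eta>"
    and nz_minus: "\<forall>r<k. exp (u - xs r) \<noteq> 1"
    and nz_plus: "\<forall>r<k. exp (u + xs r) \<noteq> 1"
  shows "exp (u - v) - 1 \<noteq> 0" and "exp (u + v - (of_nat k - 1) * \<eta>) - 1 \<noteq> 0"
proof -
  show "exp (u - v) - 1 \<noteq> 0" using nz_minus[rule_format, of 0] string[rule_format, of 0] k by simp
  have "xs (k - 1) = v - (of_nat k - 1) * \<eta>"
    using string[rule_format, of "k - 1"] k by (simp add: of_nat_diff)
  then have last: "u + xs (k - 1) = u + v - (of_nat k - 1) * \<eta>" by simp
  have "exp (u + xs (k - 1)) - 1 \<noteq> 0" using nz_plus[rule_format, of "k - 1"] k by simp
  then show "exp (u + v - (of_nat k - 1) * \<eta>) - 1 \<noteq> 0" unfolding last .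
qed

lemma cancel_nonzero_factor:
  fixes a b d r :: "'a::field"
  assumes "a * d = r" and "b * d = r" and "d \<noteq> 0"
  shows "a = b"
proof -
  have "a * d = b * d" using assms(1,2) by simp
  then show ?thesis using assms(3) by simp
qed

text \<open>A string seen from an x-variable u acts like one y-variable at its centre v - (k-1) eta/2.\<close>
lemma string_prod_xy:
  fixes u v \<eta> hb :: complex and xs :: "nat \<Rightarrow> complex" and k :: nat
  assumes hb_eq: "hb = of_nat k * \<eta>" and k: "k \<ge> 1"
    and string: "\<forall>r<k. xs r = v - of_nat r * \<eta>"
    and nz_minus: "\<forall>r<k. exp (u - xs r) \<noteq> 1"
    and nz_plus: "\<forall>r<k. exp (u + xs r) \<noteq> 1"
  shows "(\<Prod>r<k. g (u - xs r) (exp (\<eta>/2)) 1 * g (u + xs r) (exp (\<eta>/2)) 1)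
   = g (u - (v - (of_nat k - 1) * \<eta> / 2)) (exp (hb/4) * exp (\<eta>/4)) (inverse (exp (hb/4)) * exp (\<eta>/4)) *
     g (u + (v - (of_nat k - 1) * \<eta> / 2)) (exp (hb/4) * exp (\<eta>/4)) (inverse (exp (hb/4)) * exp (\<eta>/4))"
proof -
  define G where "G z = g z (exp (hb/4) * exp (\<eta>/4)) (inverse (exp (hb/4)) * exp (\<eta>/4))" for z
  note tele = string_telescope[OF string nz_minus nz_plus]
  note ends = string_ends_regular[OF k string nz_minus nz_plus]
  have "G (u - (v - (of_nat k - 1) * \<eta> / 2)) * (exp (u - v) - 1)
      = inverse (exp (\<eta>/2)) ^ k * (exp (u - v + of_nat k * \<eta>) - 1)"
    using g_xy_param_telescope[OF hb_eq, of "u - v"] ends(1) by (simp add: G_def algebra_simps)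
  then have minus: "(\<Prod>r<k. g (u - xs r) (exp (\<eta>/2)) 1) = G (u - (v - (of_nat k - 1) * \<eta> / 2))"
    using cancel_nonzero_factor[OF tele(1) _ ends(1)] by simp
  have mid: "u + v - (of_nat k - 1) * \<eta> + (of_nat k - 1) * \<eta> / 2 = u + (v - (of_nat k - 1) * \<eta> / 2)"
    and right: "u + v - (of_nat k - 1) * \<eta> + of_nat k * \<eta> = u + v + \<eta>"
    by (simp_all add: field_simps)
  have "G (u + (v - (of_nat k - 1) * \<eta> / 2)) * (exp (u + v - (of_nat k - 1) * \<eta>) - 1)
      = inverse (exp (\<eta>/2)) ^ k * (exp (u + v + \<eta>) - 1)"
    using g_xy_param_telescope[OF hb_eq, of "u + v - (of_nat k - 1) * \<eta>", unfolded mid right] ends(2)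
    by (simp add: G_def)
  then have plus: "(\<Prod>r<k. g (u + xs r) (exp (\<eta>/2)) 1) = G (u + (v - (of_nat k - 1) * \<eta> / 2))"
    using cancel_nonzero_factor[OF tele(2) _ ends(2)] by simp
  show ?thesis using minus plus by (simp add: prod.distrib G_def)
qed

text \<open>A string seen from the end point u of another string gives the y-y factors g(.; q, 1).\<close>
lemma string_prod_yy:
  fixes u v \<eta> hb :: complex and xs :: "nat \<Rightarrow> complex" and k :: nat
  assumes hb_eq: "hb = of_nat k * \<eta>" and k: "k \<ge> 1"
    and string: "\<forall>r<k. xs r = v - of_nat r * \<eta>"
    and nz_minus: "\<forall>r<k. exp (u - xs r) \<noteq> 1"
    and nz_plus: "\<forall>r<k. exp (u + xs r) \<noteq> 1"
  shows "(\<Prod>r<k. g (u - xs r) (exp (\<eta>/2)) 1 * g (u + xs r) (exp (\<eta>/2)) 1)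
   = g (u - v) (exp (hb/2)) 1 * g (u + v - (of_nat k - 1) * \<eta>) (exp (hb/2)) 1"
proof -
  note tele = string_telescope[OF string nz_minus nz_plus]
  note ends = string_ends_regular[OF k string nz_minus nz_plus]
  have minus: "(\<Prod>r<k. g (u - xs r) (exp (\<eta>/2)) 1) = g (u - v) (exp (hb/2)) 1"
    using cancel_nonzero_factor[OF tele(1) g_q_telescope[OF hb_eq] ends(1)] ends(1) by simp
  have right: "u + v - (of_nat k - 1) * \<eta> + of_nat k * \<eta> = u + v + \<eta>" by (simp add: algebra_simps)
  have plus: "(\<Prod>r<k. g (u + xs r) (exp (\<eta>/2)) 1) = g (u + v - (of_nat k - 1) * \<eta>) (exp (hb/2)) 1"
    using cancel_nonzero_factor[OF tele(2) g_q_telescope[OF hb_eq, of "u + v - (of_nat k - 1) * \<eta>", unfolded right] ends(2)] ends(2)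
    by simp
  show ?thesis using minus plus by (simp add: prod.distrib)
qed

lemma self_factor_algebra:
  fixes a R D W V A :: complex
  assumes "D \<noteq> 0" "V \<noteq> 1" "W \<noteq> 1" "A \<noteq> 0"
  shows "a * R / D * (a * (W - 1) / (V - 1)) / (A * (1 - W)) = (a^2 * R / D) / (A * (1 - V))"
proof -
  have "a * R / D * (a * (- w) / (- v)) / (A * w) = (a^2 * R / D) / (A * v)"
    if "v \<noteq> 0" "w \<noteq> 0" for v w :: complex
    using that assms by (simp add: field_simps power2_eq_square)
  from this[of "1 - V" "1 - W"] show ?thesis using assms by simp
qed

lemma string_self_telescopes:
  fixes X \<eta> hb :: complex and k :: nat
  assumes hb_eq: "hb = of_nat k * \<eta>" and k2: "k \<ge> 2"
    and eta_nonresonant: "\<And>d::int. d \<noteq> 0 \<Longrightarrow> exp (of_int d * \<eta>) \<noteq> 1"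
    and nz: "\<forall>j<k-1. exp (2*X - of_nat (Suc j) * \<eta>) \<noteq> 1"
  shows "(\<Prod>j<k-1. g (of_nat (Suc j) * \<eta>) (exp (\<eta>/2)) 1) * (exp \<eta> - 1)
           = inverse (exp (\<eta>/2)) ^ (k-1) * (exp hb - 1)"
    and "(\<Prod>j<k-1. g (2*X - of_nat (Suc j) * \<eta>) (exp (\<eta>/2)) 1) * (exp (2*(X - (of_nat k - 1) * \<eta> / 2)) - 1)
           = inverse (exp (\<eta>/2)) ^ (k-1) * (exp (2*X) - 1)"
proof -
  have "exp (\<eta> + of_nat j * \<eta>) \<noteq> 1" for j
    using eta_nonresonant[of "int j + 1"] by (simp add: algebra_simps)
  then have "(\<Prod>j<k-1. g (\<eta> + of_nat j * \<eta>) (exp (\<eta>/2)) 1) * (exp \<eta> - 1)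
      = inverse (exp (\<eta>/2)) ^ (k-1) * (exp (\<eta> + of_nat (k-1) * \<eta>) - 1)"
    by (intro g_telescope)
  moreover have "\<eta> + of_nat (k-1) * \<eta> = hb" using k2 by (simp add: hb_eq of_nat_diff algebra_simps)
  moreover have "\<eta> + of_nat j * \<eta> = of_nat (Suc j) * \<eta>" for j by (simp add: algebra_simps)
  ultimately show "(\<Prod>j<k-1. g (of_nat (Suc j) * \<eta>) (exp (\<eta>/2)) 1) * (exp \<eta> - 1)
      = inverse (exp (\<eta>/2)) ^ (k-1) * (exp hb - 1)" by simp
  have "2*X - of_nat (k-1) * \<eta> = 2*(X - (of_nat k - 1) * \<eta> / 2)"
    using k2 by (simp add: of_nat_diff field_simps)
  then show "(\<Prod>j<k-1. g (2*X - of_nat (Suc j) * \<eta>) (exp (\<eta>/2)) 1) * (exp (2*(X - (of_nat k - 1) * \<eta> / 2)) - 1)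
      = inverse (exp (\<eta>/2)) ^ (k-1) * (exp (2*X) - 1)"
    using g_telescope_rev[of "k-1" "2*X" \<eta>] nz k2 by (simp add: of_nat_diff)
qed

text \<open>Self-interaction of a string: the remaining points of the string of X produce the
  constant c_B = (1 - q^-2)/(1 - s^-2) and turn the denominators at X into those at the
  centre Y = X - (k-1) eta/2.\<close>
lemma string_self_factor:
  fixes X \<eta> hb :: complex and k :: nat
  assumes hb_eq: "hb = of_nat k * \<eta>" and k2: "k \<ge> 2"
    and eta_nonresonant: "\<And>d::int. d \<noteq> 0 \<Longrightarrow> exp (of_int d * \<eta>) \<noteq> 1"
    and nz: "\<forall>j<k-1. exp (2*X - of_nat (Suc j) * \<eta>) \<noteq> 1"
    and E1: "exp (2*X) \<noteq> 1"
    and V2: "1 - inverse (exp (\<eta>/2))^2 * exp (2*(X - (of_nat k - 1) * \<eta> / 2)) \<noteq> 0"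
    and V1: "1 - exp (2*(X - (of_nat k - 1) * \<eta> / 2)) \<noteq> 0"
  shows "(\<Prod>j<k-1. g (of_nat (Suc j) * \<eta>) (exp (\<eta>/2)) 1 * g (2*X - of_nat (Suc j) * \<eta>) (exp (\<eta>/2)) 1)
         / ((1 - inverse (exp (hb/2))^2 * exp (2*X)) * (1 - exp (2*X)))
       = ((1 - inverse (exp (hb/2))^2) / (1 - inverse (exp (\<eta>/2))^2))
         / ((1 - inverse (exp (\<eta>/2))^2 * exp (2*(X - (of_nat k - 1) * \<eta> / 2)))
            * (1 - exp (2*(X - (of_nat k - 1) * \<eta> / 2))))"
proof -
  note tele = string_self_telescopes[OF hb_eq k2 eta_nonresonant nz]
  define T where "T = exp (\<eta>/2)"
  define M where "M = T ^ (k-1)"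
  define V where "V = exp (2*(X - (of_nat k - 1) * \<eta> / 2))"
  have T0: "T \<noteq> 0" and M0: "M \<noteq> 0" unfolding T_def M_def by simp_all
  \<comment> \<open>in terms of T = s, M = s^(k-1) and V = exp (2 Y) one has q = T M and exp (2 X) = V M^2\<close>
  have exp_eta: "exp \<eta> = T^2"
    unfolding T_def by (simp flip: exp_of_nat_mult)
  have exp_hb_half: "exp (hb/2) = T * M"
  proof -
    have "exp (hb/2) = T ^ k"
      unfolding T_def by (simp add: hb_eq flip: exp_of_nat_mult)
    also have "\<dots> = T * M" unfolding M_def using k2 by (simp flip: power_Suc)
    finally show ?thesis .
  qed
  have exp_hb: "exp hb = (T * M)^2"
    using exp_numeral_mult[of "num.Bit0 num.One" "hb/2"] exp_hb_half by simp
  have exp_2X: "exp (2*X) = V * M^2"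
  proof -
    have "2*X = 2*(X - (of_nat k - 1) * \<eta> / 2) + of_nat ((k-1) * 2) * (\<eta>/2)"
      using k2 by (simp add: of_nat_diff field_simps)
    then show ?thesis unfolding V_def M_def T_def by (simp only: exp_add exp_of_nat_mult power_mult)
  qed
  have inv_M: "inverse T ^ (k-1) = inverse M" unfolding M_def by (simp add: power_inverse)
  have T1: "T^2 - 1 \<noteq> 0" using eta_nonresonant[of 1] exp_eta by simp
  have V_ne_1: "V \<noteq> 1" using V1 V_def by simp
  have p1: "(\<Prod>j<k-1. g (of_nat (Suc j) * \<eta>) T 1) = inverse M * ((T*M)^2 - 1) / (T^2 - 1)"
    using tele(1) T1 unfolding T_def[symmetric] exp_eta exp_hb inv_M by (simp add: eq_divide_eq)
  have p2: "(\<Prod>j<k-1. g (2*X - of_nat (Suc j) * \<eta>) T 1) = inverse M * (V * M^2 - 1) / (V - 1)"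
    using tele(2) V_ne_1 unfolding T_def[symmetric] V_def[symmetric] exp_2X inv_M by (simp add: eq_divide_eq)
  have q_shift: "1 - inverse (T*M)^2 * (V * M^2) = 1 - inverse T ^ 2 * V"
    using M0 by (simp add: field_simps)
  have cB: "(1 - inverse (T*M)^2) / (1 - inverse T ^ 2) = inverse M ^ 2 * ((T*M)^2 - 1) / (T^2 - 1)"
  proof -
    have "1 - inverse T ^ 2 \<noteq> 0" using T0 T1 by (auto simp: field_simps)
    then show ?thesis using T0 M0 T1 by (simp add: field_simps power2_eq_square)
  qed
  show ?thesis
    unfolding T_def[symmetric] V_def[symmetric] exp_hb_half exp_2X prod.distrib p1 p2 q_shift cB
    by (rule self_factor_algebra) (use T1 V_ne_1 E1 exp_2X V2 V_def T_def in auto)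
qed

section \<open>Blocks, the roots S0 and the subspace D0\<close>

lemma (in comm_monoid_set) blocks_split:
  fixes N1 m k :: nat
  shows "F h {1..N1 + m * k} = F h {1..N1} \<^bold>* F (\<lambda>L. F (\<lambda>r. h (N1 + k * L + r + 1)) {..<k}) {..<m}"
proof (induction m)
  case 0
  then show ?case by simp
next
  case (Suc m)
  have last_block: "{N1 + m*k + 1 .. N1 + m*k + k} = (\<lambda>r. N1 + k*m + r + 1) ` {..<k}"
  proof (rule set_eqI, rule iffI)
    fix j assume "j \<in> {N1 + m*k + 1 .. N1 + m*k + k}"
    then have "j = N1 + k*m + (j - N1 - m*k - 1) + 1" "j - N1 - m*k - 1 < k"
      by (auto simp: mult.commute)
    then show "j \<in> (\<lambda>r. N1 + k*m + r + 1) ` {..<k}" by blast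
  qed (auto simp: mult.commute)
  have "{1..N1 + Suc m * k} = {1..N1 + m*k} \<union> {N1 + m*k + 1 .. N1 + m*k + k}" by auto
  then have "F h {1..N1 + Suc m * k} = F h {1..N1 + m*k} \<^bold>* F h {N1 + m*k + 1 .. N1 + m*k + k}"
    by (simp add: union_disjoint)
  also have "F h {N1 + m*k + 1 .. N1 + m*k + k} = F (\<lambda>r. h (N1 + k*m + r + 1)) {..<k}"
    unfolding last_block by (subst reindex) (auto simp: inj_on_def)
  finally show ?case using Suc by (simp add: assoc)
qed

lemma site_eq_iff:
  fixes r r' k L L' N1 :: nat
  assumes "r < k" "r' < k"
  shows "N1 + k*L + r + 1 = N1 + k*L' + r' + 1 \<longleftrightarrow> L = L' \<and> r = r'"
proof
  assume "N1 + k*L + r + 1 = N1 + k*L' + r' + 1"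
  then have e: "k*L + r = k*L' + r'" by simp
  have "L = (k*L + r) div k" and "L' = (k*L' + r') div k" using assms by simp_all
  then have "L = L'" using e by metis
  then show "L = L' \<and> r = r'" using e by simp
qed simp

lemma site_le:
  fixes r k m L N1 :: nat
  assumes "L < m" "r < k"
  shows "N1 + k*L + r + 1 \<le> N1 + m*k"
proof -
  have "k*L + r + 1 \<le> k * Suc L" using assms by simp
  also have "\<dots> \<le> k * m" using assms(1) by (intro mult_le_mono2) simp
  finally show ?thesis by (simp add: mult.commute)
qed

lemma site_in_block_iff:
  fixes k L L' r N1 :: nat
  assumes r: "r < k"
  shows "(N1 + k*L < N1 + k*L' + r + 1 \<and> N1 + k*L' + r + 1 \<le> N1 + k*L + k) \<longleftrightarrow> L' = L"
proof
  assume h: "N1 + k*L < N1 + k*L' + r + 1 \<and> N1 + k*L' + r + 1 \<le> N1 + k*L + k"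
  show "L' = L"
  proof (rule ccontr)
    assume "L' \<noteq> L"
    then consider "Suc L' \<le> L" | "Suc L \<le> L'" by linarith
    then show False
    proof cases
      case 1
      then have "k * Suc L' \<le> k * L" by (rule mult_le_mono2)
      then show False using h r by simp
    next
      case 2
      then have "k * Suc L \<le> k * L'" by (rule mult_le_mono2)
      then show False using h r by simp
    qed
  qed
qed (use r in simp)

lemma simple_root_inj: "simple_root p = simple_root p' \<Longrightarrow> p = p'"
proof (rule ccontr)
  assume e: "simple_root p = simple_root p'" and ne: "p \<noteq> p'"
  have "simple_root p p = simple_root p' p" using e by simp
  then show False using ne by (auto simp: simple_root_def split: if_splits)
qed

lemma S0_blocks_simple_root_iff:
  "simple_root p \<in> S0_blocks N1 k m \<longleftrightarrow> (\<exists>L<m. \<exists>r. Suc r < k \<and> p = N1 + k*L + r + 1)"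
proof
  assume "simple_root p \<in> S0_blocks N1 k m"
  then obtain l j where lj: "simple_root p = simple_root (N1 + k*(l-1) + j)" "l \<in> {1..m}" "j \<in> {1..k-1}"
    unfolding S0_blocks_def by blast
  then have "p = N1 + k*(l-1) + (j-1) + 1" using simple_root_inj by fastforce
  moreover have "l - 1 < m" "Suc (j-1) < k" using lj by auto
  ultimately show "\<exists>L<m. \<exists>r. Suc r < k \<and> p = N1 + k*L + r + 1" by blast
next
  assume "\<exists>L<m. \<exists>r. Suc r < k \<and> p = N1 + k*L + r + 1"
  then obtain L r where "L < m" "Suc r < k" "p = N1 + k*L + r + 1" by blast
  then have "simple_root p = simple_root (N1 + k*(Suc L - 1) + Suc r)" "Suc L \<in> {1..m}" "Suc r \<in> {1..k-1}"
    by auto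
  then show "simple_root p \<in> S0_blocks N1 k m" unfolding S0_blocks_def by blast
qed

lemma finite_S0_blocks: "finite (S0_blocks N1 k m)"
proof -
  have "S0_blocks N1 k m \<subseteq> (\<lambda>(l,j). simple_root (N1 + k*(l-1) + j)) ` ({1..m} \<times> {1..k-1})"
    unfolding S0_blocks_def by auto
  then show ?thesis by (rule finite_subset) simp
qed

lemma D0_string:
  assumes x: "x \<in> D0 n (S0_blocks N1 k m) \<eta>" and L: "L < m" and r: "r < k"
  shows "x (N1 + k*L + r + 1) = x (N1 + k*L + 1) - of_nat r * \<eta>"
  using r
proof (induction r)
  case 0
  then show ?case by simp
next
  case (Suc r)
  have "simple_root (N1 + k*L + r + 1) \<in> S0_blocks N1 k m"
    using S0_blocks_simple_root_iff[of "N1 + k*L + r + 1" N1 k m] L Suc.prems by blast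
  then have "x (N1 + k*L + r + 1) - x (Suc (N1 + k*L + r + 1)) = \<eta>"
    using x unfolding D0_def by blast
  then show ?case using Suc by (simp add: algebra_simps)
qed

lemma sum_lessThan_of_nat: "(\<Sum>r<k. (of_nat r :: complex)) = of_nat k * (of_nat k - 1) / 2"
  by (induction k) (simp_all add: field_simps)

lemma coordmap_x:
  assumes "j \<in> {1..N1}" shows "coordmap N1 k m x j = x j"
  using assms by (simp add: coordmap_def)

lemma coordmap_block_sum:
  assumes L: "L < m"
  shows "coordmap N1 k m x (N1 + Suc L) = (1 / of_nat k) * (\<Sum>r<k. x (N1 + k*L + r + 1))"
proof -
  have "(\<Sum>s<k. x (N1 + k * Suc L - s)) = (\<Sum>s<k. x (N1 + k*L + (k - Suc s) + 1))"
  proof (rule sum.cong[OF refl])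
    fix s assume "s \<in> {..<k}"
    then have "N1 + k * Suc L - s = N1 + k*L + (k - Suc s) + 1" by simp
    then show "x (N1 + k * Suc L - s) = x (N1 + k*L + (k - Suc s) + 1)" by simp
  qed
  also have "\<dots> = (\<Sum>r<k. x (N1 + k*L + r + 1))"
    by (rule sum.nat_diff_reindex)
  finally show ?thesis using L by (simp add: coordmap_def)
qed

lemma coordmap_string_centre:
  assumes x: "x \<in> D0 n (S0_blocks N1 k m) \<eta>" and L: "L < m" and k: "k \<ge> 1"
  shows "coordmap N1 k m x (N1 + Suc L) = x (N1 + k*L + 1) - (of_nat k - 1) * \<eta> / 2"
proof -
  have "(\<Sum>r<k. x (N1 + k*L + r + 1)) = (\<Sum>r<k. x (N1 + k*L + 1) - of_nat r * \<eta>)"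
    by (rule sum.cong[OF refl], rule D0_string[OF x L], simp)
  also have "\<dots> = of_nat k * x (N1 + k*L + 1) - \<eta> * (of_nat k * (of_nat k - 1) / 2)"
    by (simp add: sum_subtractf sum_distrib_left[symmetric] mult.commute sum_lessThan_of_nat)
  finally have "coordmap N1 k m x (N1 + Suc L)
      = (1 / of_nat k) * (of_nat k * x (N1 + k*L + 1) - \<eta> * (of_nat k * (of_nat k - 1) / 2))"
    by (simp only: coordmap_block_sum[OF L])
  also have "\<dots> = x (N1 + k*L + 1) - (of_nat k - 1) * \<eta> / 2"
    using k by (simp add: field_simps)
  finally show ?thesis .
qed

locale string_blocks =
  fixes N1 k m n :: nat
  assumes k_ge_2: "k \<ge> 2" and n_eq: "n = N1 + m * k"
begin

lemma k_ge_1: "1 \<le> k"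
  using k_ge_2 by simp

lemma site_cases:
  assumes "N1 < j" "j \<le> n"
  obtains L r where "L < m" "r < k" "j = N1 + k*L + r + 1"
proof -
  define L where "L = (j - N1 - 1) div k"
  define r where "r = (j - N1 - 1) mod k"
  have "r < k" using k_ge_2 r_def by simp
  moreover have "j = N1 + k*L + r + 1" using assms unfolding L_def r_def by simp
  moreover have "j - N1 - 1 < m * k" using assms n_eq by simp
  then have "L < m" unfolding L_def using k_ge_2 by (simp add: less_mult_imp_div_less)
  ultimately show ?thesis using that by blast
qed

end

section \<open>Projection of the shifts onto Vbar\<close>

text \<open>The shift that spreads eps/k over block L: the projection of a unit shift at any site
  of block L.\<close>
definition block_avg :: "nat \<Rightarrow> nat \<Rightarrow> nat \<Rightarrow> real \<Rightarrow> nat \<Rightarrow> real" where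
  "block_avg N1 k L \<epsilon> = (\<lambda>j. if N1 + k*L < j \<and> j \<le> N1 + k*L + k then \<epsilon> / real k else 0)"

lemma ip_simple_root:
  assumes "1 \<le> p" "Suc p \<le> n"
  shows "ip n (simple_root p) \<mu> = \<mu> p - \<mu> (Suc p)"
proof -
  have "ip n (simple_root p) \<mu> = (\<Sum>j=1..n. (if j = p then \<mu> j else 0) - (if j = Suc p then \<mu> j else 0))"
    unfolding ip_def simple_root_def by (rule sum.cong) auto
  also have "\<dots> = \<mu> p - \<mu> (Suc p)"
    using assms by (simp add: sum_subtractf)
  finally show ?thesis .
qed

lemma proj_unique:
  assumes mu: "\<mu> \<in> Vbar n S0" and c: "\<forall>j. lam j - \<mu> j = (\<Sum>\<alpha>\<in>S0. c \<alpha> * \<alpha> j)" and fin: "finite S0"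
  shows "proj n S0 lam = \<mu>"
  unfolding proj_def
proof (rule the_equality)
  show "\<mu> \<in> Vbar n S0 \<and> (\<exists>c. \<forall>j. lam j - \<mu> j = (\<Sum>\<alpha>\<in>S0. c \<alpha> * \<alpha> j))" using mu c by blast
next
  fix \<nu> assume "\<nu> \<in> Vbar n S0 \<and> (\<exists>c. \<forall>j. lam j - \<nu> j = (\<Sum>\<alpha>\<in>S0. c \<alpha> * \<alpha> j))"
  then obtain c' where nu: "\<nu> \<in> Vbar n S0" and c': "\<forall>j. lam j - \<nu> j = (\<Sum>\<alpha>\<in>S0. c' \<alpha> * \<alpha> j)" by blast
  define d where "d j = \<mu> j - \<nu> j" for j
  \<comment> \<open>d lies both in the span of S0 and in its orthogonal complement, hence vanishes\<close>
  have d_span: "d j = (\<Sum>\<alpha>\<in>S0. (c' \<alpha> - c \<alpha>) * \<alpha> j)" for j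
  proof -
    have "d j = (lam j - \<nu> j) - (lam j - \<mu> j)" by (simp add: d_def)
    also have "\<dots> = (\<Sum>\<alpha>\<in>S0. c' \<alpha> * \<alpha> j) - (\<Sum>\<alpha>\<in>S0. c \<alpha> * \<alpha> j)" using c c' by simp
    also have "\<dots> = (\<Sum>\<alpha>\<in>S0. (c' \<alpha> - c \<alpha>) * \<alpha> j)" by (simp add: left_diff_distrib sum_subtractf)
    finally show ?thesis .
  qed
  have d_orth: "ip n \<alpha> d = 0" if "\<alpha> \<in> S0" for \<alpha>
  proof -
    have "ip n \<alpha> d = ip n \<alpha> \<mu> - ip n \<alpha> \<nu>" unfolding ip_def d_def by (simp add: right_diff_distrib sum_subtractf)
    then show ?thesis using mu nu that unfolding Vbar_def by simp
  qed
  have "(\<Sum>j=1..n. d j * d j) = (\<Sum>j=1..n. \<Sum>\<alpha>\<in>S0. (c' \<alpha> - c \<alpha>) * (\<alpha> j * d j))"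
    by (subst (1) d_span) (simp add: sum_distrib_right mult.assoc)
  also have "\<dots> = (\<Sum>\<alpha>\<in>S0. (c' \<alpha> - c \<alpha>) * ip n \<alpha> d)"
    unfolding ip_def by (subst sum.swap) (simp add: sum_distrib_left)
  also have "\<dots> = 0" using d_orth by simp
  finally have "(\<Sum>j=1..n. d j * d j) = 0" .
  then have "d j = 0" if "j \<in> {1..n}" for j
    using that sum_nonneg_eq_0_iff[of "{1..n}" "\<lambda>j. d j * d j"] by simp
  moreover have "d j = 0" if "j \<notin> {1..n}" for j using that mu nu unfolding Vbar_def d_def by simp
  ultimately show "\<nu> = \<mu>" unfolding d_def by (metis eq_iff_diff_eq_0 ext)
qed

lemma sum_indicator_shift:
  fixes f :: "nat \<Rightarrow> real"
  shows "(\<Sum>j<K. f j * (if i = B + j then 1 else 0)) = (if B \<le> i \<and> i < B + K then f (i - B) else 0)"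
proof -
  have "(\<Sum>j<K. f j * (if i = B + j then 1 else 0)) = (\<Sum>j<K. if B \<le> i \<and> j = i - B then f j else 0)"
    by (rule sum.cong) auto
  also have "\<dots> = (if B \<le> i \<and> i < B + K then f (i - B) else 0)"
    by (cases "B \<le> i") (auto simp: sum.delta')
  finally show ?thesis .
qed

context string_blocks
begin

lemma S0_blocks_ip:
  assumes "\<alpha> \<in> S0_blocks N1 k m"
  obtains L r where "L < m" "Suc r < k" "\<alpha> = simple_root (N1 + k*L + r + 1)"
    "ip n \<alpha> \<mu> = \<mu> (N1 + k*L + r + 1) - \<mu> (N1 + k*L + Suc r + 1)"
proof -
  obtain l j where lj: "\<alpha> = simple_root (N1 + k*(l-1) + j)" "l \<in> {1..m}" "j \<in> {1..k-1}"
    using assms unfolding S0_blocks_def by blast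
  define L where "L = l - 1"
  define r where "r = j - 1"
  have Lm: "L < m" and rk: "Suc r < k" using lj L_def r_def by auto
  have \<alpha>: "\<alpha> = simple_root (N1 + k*L + r + 1)" using lj L_def r_def by auto
  have "N1 + k*L + Suc r + 1 \<le> n" using site_le[OF Lm rk, of N1] n_eq by simp
  then have "ip n \<alpha> \<mu> = \<mu> (N1 + k*L + r + 1) - \<mu> (Suc (N1 + k*L + r + 1))"
    unfolding \<alpha> by (intro ip_simple_root) auto
  then show ?thesis using that Lm rk \<alpha> by simp
qed

lemma unitv_in_Vbar:
  assumes i: "i \<in> {1..N1}"
  shows "unitv i \<epsilon> \<in> Vbar n (S0_blocks N1 k m)"
  unfolding Vbar_def
proof (intro CollectI conjI allI impI ballI)
  fix j assume "j \<notin> {1..n}" then show "unitv i \<epsilon> j = 0" using i n_eq by (auto simp: unitv_def)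
next
  fix \<alpha> assume "\<alpha> \<in> S0_blocks N1 k m"
  then obtain L r where "L < m" "Suc r < k"
      "ip n \<alpha> (unitv i \<epsilon>) = unitv i \<epsilon> (N1 + k*L + r + 1) - unitv i \<epsilon> (N1 + k*L + Suc r + 1)"
    by (rule S0_blocks_ip)
  then show "ip n \<alpha> (unitv i \<epsilon>) = 0" using i by (simp add: unitv_def)
qed

lemma zero_in_Vbar: "(\<lambda>_. 0) \<in> Vbar n (S0_blocks N1 k m)"
  unfolding Vbar_def ip_def by simp

lemma block_avg_in_Vbar:
  assumes L: "L < m"
  shows "block_avg N1 k L \<epsilon> \<in> Vbar n (S0_blocks N1 k m)"
  unfolding Vbar_def
proof (intro CollectI conjI allI impI ballI)
  fix j assume j: "j \<notin> {1..n}"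
  have "N1 + k*L + k \<le> n" using site_le[OF L, of "k-1" k N1] n_eq k_ge_2 by simp
  then show "block_avg N1 k L \<epsilon> j = 0" using j by (auto simp: block_avg_def)
next
  fix \<alpha> assume "\<alpha> \<in> S0_blocks N1 k m"
  then obtain L' r where Lr: "L' < m" "Suc r < k" and
    ip: "ip n \<alpha> (block_avg N1 k L \<epsilon>)
       = block_avg N1 k L \<epsilon> (N1 + k*L' + r + 1) - block_avg N1 k L \<epsilon> (N1 + k*L' + Suc r + 1)"
    by (rule S0_blocks_ip)
  have "r < k" using Lr by simp
  then have "block_avg N1 k L \<epsilon> (N1 + k*L' + r + 1) = block_avg N1 k L \<epsilon> (N1 + k*L' + Suc r + 1)"
    unfolding block_avg_def using site_in_block_iff[of r k N1 L L'] site_in_block_iff[OF Lr(2), of N1 L L']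
    by simp
  then show "ip n \<alpha> (block_avg N1 k L \<epsilon>) = 0" using ip by simp
qed

lemma proj_unitv:
  assumes i: "i \<in> {1..N1}"
  shows "proj n (S0_blocks N1 k m) (unitv i \<epsilon>) = unitv i \<epsilon>"
  by (rule proj_unique[OF unitv_in_Vbar[OF i], where c="\<lambda>_. 0"]) (simp_all add: finite_S0_blocks)

lemma proj_zero: "proj n (S0_blocks N1 k m) (\<lambda>_. 0) = (\<lambda>_. 0)"
  by (rule proj_unique[OF zero_in_Vbar, where c="\<lambda>_. 0"]) (simp_all add: finite_S0_blocks)

lemma unitv_minus_block_avg:
  assumes r: "r < k"
  shows "unitv (N1 + k*L + r + 1) \<epsilon> i - block_avg N1 k L \<epsilon> i
       = (\<Sum>j<k-1. \<epsilon> * ((if r \<le> j then 1 else 0) - real (Suc j) / real k) * simple_root (N1 + k*L + j + 1) i)"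
proof -
  define b where "b = N1 + k*L"
  define cf where "cf j = \<epsilon> * ((if r \<le> j then 1 else 0) - real (Suc j) / real k)" for j
  have kpos: "real k > 0" using k_ge_2 by simp
  have "(\<Sum>j<k-1. cf j * simple_root (b + j + 1) i)
      = (\<Sum>j<k-1. cf j * (if i = (b + 1) + j then 1 else 0)) - (\<Sum>j<k-1. cf j * (if i = (b + 2) + j then 1 else 0))"
    unfolding sum_subtractf[symmetric] simple_root_def by (intro sum.cong refl) auto
  also have "\<dots> = (if b + 1 \<le> i \<and> i < b + 1 + (k-1) then cf (i - (b+1)) else 0)
                 - (if b + 2 \<le> i \<and> i < b + 2 + (k-1) then cf (i - (b+2)) else 0)"
    unfolding sum_indicator_shift ..
  also have "\<dots> = unitv (b + r + 1) \<epsilon> i - block_avg N1 k L \<epsilon> i"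
  proof -
    have lhs: "unitv (b + r + 1) \<epsilon> i - block_avg N1 k L \<epsilon> i
        = (if i = b + r + 1 then \<epsilon> else 0) - (if b < i \<and> i \<le> b + k then \<epsilon> / real k else 0)"
      unfolding unitv_def block_avg_def b_def by simp
    consider "i \<le> b" | "b + k < i" | "i = b + 1" | "b + 2 \<le> i" "i < b + k" | "i = b + k"
      using k_ge_2 by linarith
    then show ?thesis
    proof cases
      case 1
      then show ?thesis unfolding lhs by auto
    next
      case 2
      then show ?thesis unfolding lhs using r by auto
    next
      case 3
      then show ?thesis unfolding lhs using k_ge_2 kpos by (auto simp: cf_def field_simps)
    next
      case 4
      define q where "q = i - b"
      have q: "i = b + q" "2 \<le> q" "q \<le> k - 1" using 4 by (auto simp: q_def)
      have "real (Suc (q - 1)) = real (Suc (q-2)) + 1" using q by simp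
      moreover have "(if r \<le> q - 1 then 1 else 0) - (if r \<le> q - 2 then 1 else (0::real)) = (if q = r + 1 then 1 else 0)"
        using q by auto
      ultimately have "cf (q-1) - cf (q-2) = (if q = r + 1 then \<epsilon> else 0) - \<epsilon> / real k"
        unfolding cf_def using kpos by (simp add: field_simps)
      moreover have "i - (b+1) = q - 1" "i - (b+2) = q - 2" using q by auto
      ultimately show ?thesis unfolding lhs using q by auto
    next
      case 5
      have "real (Suc (k - 2)) = real k - 1" using k_ge_2 by (simp add: of_nat_diff)
      then have "- cf (k - 2) = (if k = r + 1 then \<epsilon> else 0) - \<epsilon> / real k"
        unfolding cf_def using kpos r by (auto simp: field_simps)
      moreover have "i - (b+2) = k - 2" using 5 k_ge_2 by auto
      ultimately show ?thesis unfolding lhs using 5 k_ge_2 by auto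
    qed
  qed
  finally show ?thesis by (simp add: b_def cf_def)
qed

lemma proj_string_site:
  assumes L: "L < m" and r: "r < k"
  shows "proj n (S0_blocks N1 k m) (unitv (N1 + k*L + r + 1) \<epsilon>) = block_avg N1 k L \<epsilon>"
proof -
  define cf where "cf j = \<epsilon> * ((if r \<le> j then 1 else 0) - real (Suc j) / real k)" for j
  define c where "c \<alpha> = (\<Sum>j<k-1. if \<alpha> = simple_root (N1 + k*L + j + 1) then cf j else 0)" for \<alpha>
  have root_in_S0: "simple_root (N1 + k*L + j + 1) \<in> S0_blocks N1 k m" if "j < k-1" for j
    unfolding S0_blocks_simple_root_iff using L that by auto
  show ?thesis
  proof (rule proj_unique[OF block_avg_in_Vbar[OF L] _ finite_S0_blocks], intro allI)
    fix i
    have "(\<Sum>\<alpha>\<in>S0_blocks N1 k m. c \<alpha> * \<alpha> i)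
        = (\<Sum>j<k-1. \<Sum>\<alpha>\<in>S0_blocks N1 k m. if \<alpha> = simple_root (N1 + k*L + j + 1) then cf j * \<alpha> i else 0)"
      unfolding c_def sum_distrib_right by (subst sum.swap) (intro sum.cong refl, simp)
    also have "\<dots> = (\<Sum>j<k-1. cf j * simple_root (N1 + k*L + j + 1) i)"
      using root_in_S0 finite_S0_blocks by (intro sum.cong refl) (simp add: sum.delta)
    finally show "unitv (N1 + k*L + r + 1) \<epsilon> i - block_avg N1 k L \<epsilon> i = (\<Sum>\<alpha>\<in>S0_blocks N1 k m. c \<alpha> * \<alpha> i)"
      unfolding unitv_minus_block_avg[OF r] cf_def by simp
  qed
qed

end

section \<open>Displacements of the restricted shifts in the coordinates (x, y)\<close>

definition shift_coords :: "nat \<Rightarrow> nat \<Rightarrow> nat \<Rightarrow> complex \<Rightarrow> (nat \<Rightarrow> real) \<Rightarrow> nat \<Rightarrow> complex" where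
  "shift_coords N1 k m hb \<mu> = coordmap N1 k m (\<lambda>j. hb * complex_of_real (\<mu> j))"

context string_blocks
begin

lemma Vbar_block_const:
  assumes mu: "\<mu> \<in> Vbar n (S0_blocks N1 k m)" and L: "L < m" and r: "r < k"
  shows "\<mu> (N1 + k*L + r + 1) = \<mu> (N1 + k*L + 1)"
  using r
proof (induction r)
  case 0 then show ?case by simp
next
  case (Suc r)
  have root: "simple_root (N1 + k*L + r + 1) \<in> S0_blocks N1 k m"
    using S0_blocks_simple_root_iff[of "N1 + k*L + r + 1" N1 k m] L Suc.prems by blast
  have "N1 + k*L + Suc r + 1 \<le> n" using site_le[OF L Suc.prems, of N1] n_eq by simp
  then have "ip n (simple_root (N1 + k*L + r + 1)) \<mu> = \<mu> (N1 + k*L + r + 1) - \<mu> (Suc (N1 + k*L + r + 1))"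
    by (intro ip_simple_root) auto
  moreover have "ip n (simple_root (N1 + k*L + r + 1)) \<mu> = 0" using mu root unfolding Vbar_def by blast
  ultimately show ?case using Suc by simp
qed

lemma shift_coords_block:
  assumes mu: "\<mu> \<in> Vbar n (S0_blocks N1 k m)" and L: "L < m"
  shows "shift_coords N1 k m hb \<mu> (N1 + Suc L) = hb * complex_of_real (\<mu> (N1 + k*L + 1))"
proof -
  have "shift_coords N1 k m hb \<mu> (N1 + Suc L)
      = (1 / of_nat k) * (\<Sum>r<k. hb * complex_of_real (\<mu> (N1 + k*L + r + 1)))"
    unfolding shift_coords_def by (rule coordmap_block_sum[OF L])
  also have "\<dots> = (1 / of_nat k) * (\<Sum>r<k. hb * complex_of_real (\<mu> (N1 + k*L + 1)))"
    by (rule arg_cong[where f="\<lambda>s. _ * s"], rule sum.cong[OF refl], subst Vbar_block_const[OF mu L]) simp_all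
  also have "\<dots> = hb * complex_of_real (\<mu> (N1 + k*L + 1))"
    using k_ge_2 by simp
  finally show ?thesis .
qed

lemma shift_coords_x:
  assumes "j \<in> {1..N1}" shows "shift_coords N1 k m hb \<mu> j = hb * complex_of_real (\<mu> j)"
  using assms by (simp add: shift_coords_def coordmap_def)

lemma shift_coords_unitv:
  assumes i: "i \<in> {1..N1}"
  shows "shift_coords N1 k m hb (unitv i \<epsilon>) = unitv i (complex_of_real \<epsilon> * hb)"
proof (rule ext)
  fix j
  show "shift_coords N1 k m hb (unitv i \<epsilon>) j = unitv i (complex_of_real \<epsilon> * hb) j"
  proof (cases "1 \<le> j \<and> j \<le> N1")
    case True then show ?thesis by (simp add: shift_coords_def coordmap_def unitv_def)
  next
    case False
    have "(\<Sum>s<k. hb * complex_of_real (unitv i \<epsilon> (N1 + k * (j - N1) - s))) = 0" if "N1 < j"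
    proof (rule sum.neutral, intro ballI)
      fix s assume "s \<in> {..<k}"
      then have "s < k" by simp
      moreover have "k * 1 \<le> k * (j - N1)" using that by (intro mult_le_mono2) simp
      ultimately have "N1 + k * (j - N1) - s > N1" by linarith
      then show "hb * complex_of_real (unitv i \<epsilon> (N1 + k * (j - N1) - s)) = 0" using i by (simp add: unitv_def)
    qed
    then show ?thesis using False i by (auto simp: shift_coords_def coordmap_def unitv_def)
  qed
qed

lemma shift_coords_zero: "shift_coords N1 k m hb (\<lambda>_. 0) = (\<lambda>_. 0)"
  by (rule ext) (simp add: shift_coords_def coordmap_def)

end

locale koornwinder_restriction = string_blocks +
  fixes \<eta> hb t1 :: complex
  assumes hb_eq: "hb = of_nat k * \<eta>"
    and hb_generic: "\<forall>r\<in>(\<rat>::real set). hb \<noteq> \<i> * complex_of_real (pi * r)"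
    and t1_eq: "t1 = exp (\<eta> / 2)"
begin

lemma eta_nonresonant: "d \<noteq> 0 \<Longrightarrow> exp (of_int d * \<eta>) \<noteq> 1"
  by (rule exp_int_mult_ne_1[OF hb_generic hb_eq])

lemma hb_nonzero: "hb \<noteq> 0"
  using hb_generic[rule_format, of 0] by simp

lemma shift_coords_inj:
  assumes mu1: "\<mu>1 \<in> Vbar n (S0_blocks N1 k m)" and mu2: "\<mu>2 \<in> Vbar n (S0_blocks N1 k m)"
    and eq: "shift_coords N1 k m hb \<mu>1 = shift_coords N1 k m hb \<mu>2"
  shows "\<mu>1 = \<mu>2"
proof (rule ext)
  fix j
  consider "j \<notin> {1..n}" | "j \<in> {1..N1}" | "N1 < j" "j \<le> n" by fastforce
  then show "\<mu>1 j = \<mu>2 j"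
  proof cases
    case 1 then show ?thesis using mu1 mu2 unfolding Vbar_def by simp
  next
    case 2
    then have "hb * complex_of_real (\<mu>1 j) = hb * complex_of_real (\<mu>2 j)"
      using eq shift_coords_x[OF 2] by metis
    then show ?thesis using hb_nonzero by simp
  next
    case 3
    then obtain L r where Lr: "L < m" "r < k" "j = N1 + k*L + r + 1" by (rule site_cases)
    have "hb * complex_of_real (\<mu>1 (N1 + k*L + 1)) = hb * complex_of_real (\<mu>2 (N1 + k*L + 1))"
      using shift_coords_block[OF mu1 Lr(1)] shift_coords_block[OF mu2 Lr(1)] eq by metis
    then have "\<mu>1 (N1 + k*L + 1) = \<mu>2 (N1 + k*L + 1)" using hb_nonzero by simp
    then show ?thesis using Vbar_block_const[OF mu1 Lr(1,2)] Vbar_block_const[OF mu2 Lr(1,2)] Lr(3) by simp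
  qed
qed

text \<open>The average of block L moves only y_(L+1), by eps eta: this is the xi-shift with xi = eta.\<close>
lemma shift_coords_block_avg:
  assumes L: "L < m"
  shows "shift_coords N1 k m hb (block_avg N1 k L \<epsilon>) = unitv (N1 + Suc L) (complex_of_real \<epsilon> * \<eta>)"
proof (rule ext)
  fix j
  consider "1 \<le> j \<and> j \<le> N1" | L' where "j = N1 + Suc L'" "L' < m" | "\<not> (1 \<le> j \<and> j \<le> N1 + m)"
  proof -
    consider "1 \<le> j \<and> j \<le> N1" | "N1 < j \<and> j \<le> N1 + m" | "\<not> (1 \<le> j \<and> j \<le> N1 + m)" by linarith
    then show thesis
    proof cases
      case 2
      then have "j = N1 + Suc (j - N1 - 1)" "j - N1 - 1 < m" by auto
      then show thesis using that(2) by blast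
    qed (use that in auto)
  qed
  then show "shift_coords N1 k m hb (block_avg N1 k L \<epsilon>) j = unitv (N1 + Suc L) (complex_of_real \<epsilon> * \<eta>) j"
  proof cases
    case 1 then show ?thesis by (auto simp: shift_coords_def coordmap_def unitv_def block_avg_def)
  next
    case 2
    have first_site: "block_avg N1 k L \<epsilon> (N1 + k*L' + 1) = (if L' = L then \<epsilon> / real k else 0)"
      using site_in_block_iff[of 0 k N1 L L'] k_ge_2 unfolding block_avg_def by simp
    have "shift_coords N1 k m hb (block_avg N1 k L \<epsilon>) j = hb * complex_of_real (block_avg N1 k L \<epsilon> (N1 + k*L' + 1))"
      unfolding 2 by (rule shift_coords_block[OF block_avg_in_Vbar[OF L] 2(2)])
    also have "\<dots> = (if L' = L then complex_of_real \<epsilon> * \<eta> else 0)"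
      using first_site k_ge_2 by (auto simp: hb_eq field_simps)
    finally show ?thesis unfolding 2 by (auto simp: unitv_def)
  next
    case 3 then show ?thesis using L by (auto simp: shift_coords_def coordmap_def unitv_def)
  qed
qed

lemma shift_coords_eq_x_shift_iff:
  assumes lam: "lam \<in> Vbar n (S0_blocks N1 k m)" and i: "i \<in> {1..N1}"
  shows "shift_coords N1 k m hb lam = unitv i (complex_of_real \<epsilon> * hb) \<longleftrightarrow> lam = unitv i \<epsilon>"
  using shift_coords_inj[OF lam unitv_in_Vbar[OF i]] shift_coords_unitv[OF i] by metis

lemma shift_coords_eq_y_shift_iff:
  assumes lam: "lam \<in> Vbar n (S0_blocks N1 k m)" and L: "L < m"
  shows "shift_coords N1 k m hb lam = unitv (N1 + Suc L) (complex_of_real \<epsilon> * \<eta>) \<longleftrightarrow> lam = block_avg N1 k L \<epsilon>"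
  using shift_coords_inj[OF lam block_avg_in_Vbar[OF L]] shift_coords_block_avg[OF L] by metis

lemma shift_coords_eq_zero_iff:
  assumes lam: "lam \<in> Vbar n (S0_blocks N1 k m)"
  shows "shift_coords N1 k m hb lam = (\<lambda>_. 0) \<longleftrightarrow> lam = (\<lambda>_. 0)"
  using shift_coords_inj[OF lam zero_in_Vbar] shift_coords_zero by metis

end

section \<open>Coefficients of the Koornwinder operator on D0\<close>

lemma gden_1: "gden z 1 = exp z - 1"
  by (simp add: gden_def)

lemma koorn_regular_D:
  assumes kr: "koorn_regular n hb x" and i: "i \<in> {1..n}" and \<epsilon>: "\<epsilon> \<in> {1, -1::real}"
  shows "\<forall>j\<in>{1..n} - {i}. exp (complex_of_real \<epsilon> * x i - x j) \<noteq> 1 \<and> exp (complex_of_real \<epsilon> * x i + x j) \<noteq> 1"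
    and "1 - exp (2 * (complex_of_real \<epsilon> * x i)) \<noteq> 0"
proof -
  have a: "2 * complex_of_real \<epsilon> * x i = 2 * (complex_of_real \<epsilon> * x i)" by (rule mult.assoc)
  note h = kr[unfolded koorn_regular_def Let_def, rule_format, OF i \<epsilon>, unfolded a gden_1]
  show "\<forall>j\<in>{1..n} - {i}. exp (complex_of_real \<epsilon> * x i - x j) \<noteq> 1 \<and> exp (complex_of_real \<epsilon> * x i + x j) \<noteq> 1"
    using h by simp
  show "1 - exp (2 * (complex_of_real \<epsilon> * x i)) \<noteq> 0"
    using h by blast
qed

lemma gk_regular_y_D:
  assumes gr: "gk_regular N1 m hb \<xi> z" and l: "l \<in> {1..m}" and \<epsilon>: "\<epsilon> \<in> {1, -1::real}"
  shows "1 - (inverse (exp (\<xi>/2)))^2 * exp (2 * (complex_of_real \<epsilon> * z (N1 + l))) \<noteq> 0"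
    and "1 - exp (2 * (complex_of_real \<epsilon> * z (N1 + l))) \<noteq> 0"
proof -
  have a: "2 * complex_of_real \<epsilon> * z (N1 + l) = 2 * (complex_of_real \<epsilon> * z (N1 + l))" by (rule mult.assoc)
  note h = conjunct2[OF gr[unfolded gk_regular_def Let_def], rule_format, OF l \<epsilon>, unfolded a]
  show "1 - (inverse (exp (\<xi>/2)))^2 * exp (2 * (complex_of_real \<epsilon> * z (N1 + l))) \<noteq> 0"
    using h by blast
  show "1 - exp (2 * (complex_of_real \<epsilon> * z (N1 + l))) \<noteq> 0"
    using h by blast
qed

lemma prod_Diff_singleton_if:
  fixes F :: "nat \<Rightarrow> 'a::comm_monoid_mult"
  assumes "finite A"
  shows "(\<Prod>j\<in>A - {i}. F j) = (\<Prod>j\<in>A. if j = i then 1 else F j)"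
  using prod.delta_remove[OF assms, of i "\<lambda>_. 1" F] by simp

context string_blocks
begin

lemma prod_except_x_site:
  fixes F :: "nat \<Rightarrow> 'a::comm_monoid_mult"
  assumes i: "i \<in> {1..N1}"
  shows "(\<Prod>j\<in>{1..n} - {i}. F j) = (\<Prod>j\<in>{1..N1} - {i}. F j) * (\<Prod>L<m. \<Prod>r<k. F (N1 + k*L + r + 1))"
proof -
  have "(\<Prod>j\<in>{1..n} - {i}. F j) = (\<Prod>j\<in>{1..N1}. if j = i then 1 else F j) *
      (\<Prod>L<m. \<Prod>r<k. if N1 + k*L + r + 1 = i then 1 else F (N1 + k*L + r + 1))"
    unfolding prod_Diff_singleton_if[OF finite_atLeastAtMost] n_eq by (rule prod.blocks_split)
  also have "(\<Prod>L<m. \<Prod>r<k. if N1 + k*L + r + 1 = i then 1 else F (N1 + k*L + r + 1))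
      = (\<Prod>L<m. \<Prod>r<k. F (N1 + k*L + r + 1))"
    using i by (intro prod.cong refl) auto
  finally show ?thesis by (simp add: prod_Diff_singleton_if)
qed

lemma prod_except_string_site:
  fixes F :: "nat \<Rightarrow> 'a::comm_monoid_mult"
  assumes L: "L < m" and r0: "r0 < k"
  shows "(\<Prod>j\<in>{1..n} - {N1 + k*L + r0 + 1}. F j)
       = (\<Prod>j\<in>{1..N1}. F j) * ((\<Prod>r\<in>{..<k} - {r0}. F (N1 + k*L + r + 1))
           * (\<Prod>L'\<in>{..<m} - {L}. \<Prod>r<k. F (N1 + k*L' + r + 1)))"
proof -
  define p where "p = N1 + k*L + r0 + 1"
  define H where "H L' = (\<Prod>r<k. if N1 + k*L' + r + 1 = p then 1 else F (N1 + k*L' + r + 1))" for L'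
  have "(\<Prod>j\<in>{1..n} - {p}. F j) = (\<Prod>j\<in>{1..N1}. if j = p then 1 else F j) * (\<Prod>L'<m. H L')"
    unfolding prod_Diff_singleton_if[OF finite_atLeastAtMost] n_eq H_def by (rule prod.blocks_split)
  also have "(\<Prod>j\<in>{1..N1}. if j = p then 1 else F j) = (\<Prod>j\<in>{1..N1}. F j)"
    by (intro prod.cong refl) (auto simp: p_def)
  also have "(\<Prod>L'<m. H L') = H L * (\<Prod>L'\<in>{..<m} - {L}. H L')"
    using L by (subst prod.remove[of "{..<m}" L]) auto
  also have "H L = (\<Prod>r\<in>{..<k} - {r0}. F (N1 + k*L + r + 1))"
  proof -
    have "H L = (\<Prod>r<k. if r = r0 then 1 else F (N1 + k*L + r + 1))"
      unfolding H_def p_def using r0 by (intro prod.cong refl) (auto simp: site_eq_iff)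
    then show ?thesis unfolding prod_Diff_singleton_if[OF finite_lessThan] .
  qed
  also have "H L' = (\<Prod>r<k. F (N1 + k*L' + r + 1))" if "L' \<in> {..<m} - {L}" for L'
  proof -
    have "N1 + k*L' + r + 1 \<noteq> p" if "r < k" for r
      using site_eq_iff[OF that r0, of N1 L' L] \<open>L' \<in> {..<m} - {L}\<close> by (auto simp: p_def)
    then show ?thesis unfolding H_def by (intro prod.cong refl) auto
  qed
  then have "(\<Prod>L'\<in>{..<m} - {L}. H L') = (\<Prod>L'\<in>{..<m} - {L}. \<Prod>r<k. F (N1 + k*L' + r + 1))"
    by (rule prod.cong[OF refl])
  finally show ?thesis unfolding p_def .
qed

end

context koornwinder_restriction
begin

abbreviation gen_A :: "complex \<Rightarrow> complex \<Rightarrow> complex \<Rightarrow> complex \<Rightarrow> nat \<Rightarrow> real \<Rightarrow> (nat \<Rightarrow> complex) \<Rightarrow> complex"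
  where "gen_A t0 tn u0 un i \<epsilon> x \<equiv>
    gk_A N1 m hb \<eta> (t0 * u0 * inverse (exp (hb / 2))) (- (t0 * inverse u0 * inverse (exp (hb / 2))))
      (tn * un) (- (tn * inverse un)) i \<epsilon> (coordmap N1 k m x)"

abbreviation gen_B :: "complex \<Rightarrow> complex \<Rightarrow> complex \<Rightarrow> complex \<Rightarrow> nat \<Rightarrow> real \<Rightarrow> (nat \<Rightarrow> complex) \<Rightarrow> complex"
  where "gen_B t0 tn u0 un l \<epsilon> x \<equiv>
    gk_B N1 m hb \<eta> (t0 * u0 * inverse (exp (hb / 2))) (- (t0 * inverse u0 * inverse (exp (hb / 2))))
      (tn * un) (- (tn * inverse un)) l \<epsilon> (coordmap N1 k m x)"

abbreviation c_B :: complex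
  where "c_B \<equiv> (1 - (inverse (exp (hb / 2)))^2) / (1 - (inverse (exp (\<eta> / 2)))^2)"

text \<open>The coefficient of a free site: each string interacts with x_i like the y-variable at
  its centre, so the Koornwinder coefficient is (t0 tn)^-1 A_i.\<close>
lemma x_site_coeff:
  assumes x: "x \<in> D0 n (S0_blocks N1 k m) \<eta>" and kr: "koorn_regular n hb x"
    and i: "i \<in> {1..N1}" and \<epsilon>: "\<epsilon> \<in> {1, -1}"
  shows "koorn_C n hb t0 t1 tn u0 un i \<epsilon> x = inverse (t0 * tn) * gen_A t0 tn u0 un i \<epsilon> x"
proof -
  define e where "e = complex_of_real \<epsilon>"
  define u where "u = e * x i"
  define z where "z = coordmap N1 k m x"
  define F where "F j = g (u - x j) t1 1 * g (u + x j) t1 1" for j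
  define G where "G w = g w (exp (hb/4) * exp (\<eta>/4)) (inverse (exp (hb/4)) * exp (\<eta>/4))" for w
  have reg: "\<forall>j\<in>{1..n} - {i}. exp (u - x j) \<noteq> 1 \<and> exp (u + x j) \<noteq> 1"
    using koorn_regular_D(1)[OF kr _ \<epsilon>] i n_eq unfolding u_def e_def by auto
  have z_x: "z j = x j" if "j \<in> {1..N1}" for j using that by (simp add: z_def coordmap_x)
  have k1: "k \<ge> 1" using k_ge_2 by simp
  have string_factor: "(\<Prod>r<k. F (N1 + k*L + r + 1)) = G (u - z (N1 + Suc L)) * G (u + z (N1 + Suc L))"
    if L: "L < m" for L
  proof -
    have in_range: "N1 + k*L + r + 1 \<in> {1..n} - {i}" if "r < k" for r
      using site_le[OF L that, of N1] i n_eq by auto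
    have "(\<Prod>r<k. F (N1 + k*L + r + 1)) =
      G (u - (x (N1 + k*L + 1) - (of_nat k - 1) * \<eta> / 2)) * G (u + (x (N1 + k*L + 1) - (of_nat k - 1) * \<eta> / 2))"
    proof -
      have string: "\<forall>r<k. x (N1 + k*L + r + 1) = x (N1 + k*L + 1) - of_nat r * \<eta>"
        using D0_string[OF x L] by blast
      have "\<forall>r<k. exp (u - x (N1 + k*L + r + 1)) \<noteq> 1" "\<forall>r<k. exp (u + x (N1 + k*L + r + 1)) \<noteq> 1"
        using reg in_range by blast+
      then show ?thesis unfolding F_def t1_eq G_def by (rule string_prod_xy[OF hb_eq k1 string])
    qed
    also have "x (N1 + k*L + 1) - (of_nat k - 1) * \<eta> / 2 = z (N1 + Suc L)"
      unfolding z_def by (rule coordmap_string_centre[OF x L k1, symmetric])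
    finally show ?thesis .
  qed
  have "(\<Prod>j\<in>{1..n} - {i}. F j) = (\<Prod>j\<in>{1..N1} - {i}. F j) * (\<Prod>L<m. \<Prod>r<k. F (N1 + k*L + r + 1))"
    by (rule prod_except_x_site[OF i])
  also have "(\<Prod>j\<in>{1..N1} - {i}. F j) = (\<Prod>j\<in>{1..N1} - {i}. g (u - z j) (exp (\<eta>/2)) 1 * g (u + z j) (exp (\<eta>/2)) 1)"
    by (intro prod.cong refl) (simp add: F_def z_x t1_eq)
  also have "(\<Prod>L<m. \<Prod>r<k. F (N1 + k*L + r + 1)) = (\<Prod>L<m. G (u - z (N1 + Suc L)) * G (u + z (N1 + Suc L)))"
    by (rule prod.cong[OF refl], rule string_factor) simp
  also have "\<dots> = (\<Prod>l\<in>{1..m}. G (u - z (N1 + l)) * G (u + z (N1 + l)))"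
    using prod.atLeast1_atMost_eq[of "\<lambda>l. G (u - z (N1 + l)) * G (u + z (N1 + l))" m] by simp
  finally have prod_eq: "(\<Prod>j\<in>{1..n} - {i}. F j)
      = (\<Prod>j\<in>{1..N1} - {i}. g (u - z j) (exp (\<eta>/2)) 1 * g (u + z j) (exp (\<eta>/2)) 1) *
        (\<Prod>l\<in>{1..m}. G (u - z (N1 + l)) * G (u + z (N1 + l)))" .
  show ?thesis
    unfolding koorn_C_def gk_A_def Let_def e_def[symmetric] z_def[symmetric] z_x[OF i]
      u_def[symmetric] F_def[symmetric] prod_eq[unfolded G_def]
    by (simp add: algebra_simps)
qed

end

lemma string_end_algebra:
  fixes a b h c l l' D D' C :: complex
  assumes "h / D = C / D'" and "l = l'"
  shows "a * (b * (h * c)) * l / D = a * (C * (b * c * l' / D'))"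
proof -
  have "a * (b * (h * c)) * l / D = a * b * c * l * (h / D)" by (simp add: divide_inverse ac_simps)
  also have "\<dots> = a * (C * (b * c * l' / D'))" using assms by (simp add: divide_inverse ac_simps)
  finally show ?thesis .
qed

context koornwinder_restriction
begin

text \<open>Seen from a point X, a whole string of x-variables acts like the single
  y-variable at its centre, with parameter q instead of t1.\<close>
lemma other_string_factor:
  assumes x: "x \<in> D0 n (S0_blocks N1 k m) \<eta>" and L: "L < m"
    and nz_minus: "\<forall>r<k. exp (X - x (N1 + k*L + r + 1)) \<noteq> 1"
    and nz_plus: "\<forall>r<k. exp (X + x (N1 + k*L + r + 1)) \<noteq> 1"
  shows "(\<Prod>r<k. g (X - x (N1 + k*L + r + 1)) t1 1 * g (X + x (N1 + k*L + r + 1)) t1 1)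
       = g ((X - (of_nat k - 1) * \<eta> / 2) - coordmap N1 k m x (N1 + Suc L)) (exp (hb/2)) 1
         * g ((X - (of_nat k - 1) * \<eta> / 2) + coordmap N1 k m x (N1 + Suc L)) (exp (hb/2)) 1"
proof -
  have k1: "k \<ge> 1" using k_ge_2 by simp
  have string: "\<forall>r<k. x (N1 + k*L + r + 1) = x (N1 + k*L + 1) - of_nat r * \<eta>"
    using D0_string[OF x L] by blast
  have y: "coordmap N1 k m x (N1 + Suc L) = x (N1 + k*L + 1) - (of_nat k - 1) * \<eta> / 2"
    by (rule coordmap_string_centre[OF x L k1])
  have minus: "(X - (of_nat k - 1) * \<eta> / 2) - coordmap N1 k m x (N1 + Suc L) = X - x (N1 + k*L + 1)"
    unfolding y by (simp add: algebra_simps)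
  have plus: "(X - (of_nat k - 1) * \<eta> / 2) + coordmap N1 k m x (N1 + Suc L)
      = X + x (N1 + k*L + 1) - (of_nat k - 1) * \<eta>"
    unfolding y by (simp add: field_simps)
  show ?thesis
    unfolding t1_eq minus plus by (rule string_prod_yy[OF hb_eq k1 string nz_minus nz_plus])
qed

text \<open>Seen from the end point X of the string in block L, the free variables interact with
  the centre Y = X - (k-1) eta/2 through the y-x factors of B.\<close>
lemma free_sites_from_string_end:
  assumes L: "L < m" and r0: "r0 < k"
    and reg: "\<forall>j\<in>{1..n} - {N1 + k*L + r0 + 1}. exp (X - x j) \<noteq> 1 \<and> exp (X + x j) \<noteq> 1"
  shows "(\<Prod>j\<in>{1..N1}. g (X - x j) t1 1 * g (X + x j) t1 1)
       = (\<Prod>j\<in>{1..N1}.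
            g ((X - (of_nat k - 1) * \<eta> / 2) - coordmap N1 k m x j) (exp (hb/4) * exp (\<eta>/4)) (exp (hb/4) * inverse (exp (\<eta>/4))) *
            g ((X - (of_nat k - 1) * \<eta> / 2) + coordmap N1 k m x j) (exp (hb/4) * exp (\<eta>/4)) (exp (hb/4) * inverse (exp (\<eta>/4))))"
proof (rule prod.cong[OF refl])
  fix j assume j: "j \<in> {1..N1}"
  then have "j \<in> {1..n} - {N1 + k*L + r0 + 1}" using n_eq by auto
  then have e1: "exp (X - x j) \<noteq> 1" and e2: "exp (X + x j) \<noteq> 1" using reg by auto
  have minus: "(X - (of_nat k - 1) * \<eta> / 2) - coordmap N1 k m x j = (X - x j) - (of_nat k - 1) * \<eta> / 2"
    and plus: "(X - (of_nat k - 1) * \<eta> / 2) + coordmap N1 k m x j = (X + x j) - (of_nat k - 1) * \<eta> / 2"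
    using j by (simp_all add: coordmap_x algebra_simps)
  show "g (X - x j) t1 1 * g (X + x j) t1 1
      = g ((X - (of_nat k - 1) * \<eta> / 2) - coordmap N1 k m x j) (exp (hb/4) * exp (\<eta>/4)) (exp (hb/4) * inverse (exp (\<eta>/4))) *
        g ((X - (of_nat k - 1) * \<eta> / 2) + coordmap N1 k m x j) (exp (hb/4) * exp (\<eta>/4)) (exp (hb/4) * inverse (exp (\<eta>/4)))"
    unfolding minus plus g_yx_param_shift[OF hb_eq e1] g_yx_param_shift[OF hb_eq e2] t1_eq ..
qed

text \<open>Seen from the end point X of the string in block L, every other string interacts with
  the centre Y = X - (k-1) eta/2 through the y-y factors of B.\<close>
lemma other_strings_from_string_end:
  assumes x: "x \<in> D0 n (S0_blocks N1 k m) \<eta>" and L: "L < m" and r0: "r0 < k"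
    and reg: "\<forall>j\<in>{1..n} - {N1 + k*L + r0 + 1}. exp (X - x j) \<noteq> 1 \<and> exp (X + x j) \<noteq> 1"
  shows "(\<Prod>L'\<in>{..<m} - {L}. \<Prod>r<k. g (X - x (N1 + k*L' + r + 1)) t1 1 * g (X + x (N1 + k*L' + r + 1)) t1 1)
       = (\<Prod>l'\<in>{1..m} - {Suc L}.
            g ((X - (of_nat k - 1) * \<eta> / 2) - coordmap N1 k m x (N1 + l')) (exp (hb/2)) 1 *
            g ((X - (of_nat k - 1) * \<eta> / 2) + coordmap N1 k m x (N1 + l')) (exp (hb/2)) 1)"
proof -
  have "(\<Prod>r<k. g (X - x (N1 + k*L' + r + 1)) t1 1 * g (X + x (N1 + k*L' + r + 1)) t1 1)
      = g ((X - (of_nat k - 1) * \<eta> / 2) - coordmap N1 k m x (N1 + Suc L')) (exp (hb/2)) 1 *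
        g ((X - (of_nat k - 1) * \<eta> / 2) + coordmap N1 k m x (N1 + Suc L')) (exp (hb/2)) 1"
    if L': "L' \<in> {..<m} - {L}" for L'
  proof -
    have "N1 + k*L' + r + 1 \<in> {1..n} - {N1 + k*L + r0 + 1}" if "r < k" for r
      using site_le[of L' m r k N1] site_eq_iff[OF that r0, of N1 L' L] L' that n_eq by auto
    then have "\<forall>r<k. exp (X - x (N1 + k*L' + r + 1)) \<noteq> 1" "\<forall>r<k. exp (X + x (N1 + k*L' + r + 1)) \<noteq> 1"
      using reg by blast+
    then show ?thesis using other_string_factor[OF x] L' by simp
  qed
  moreover have "{1..m} - {Suc L} = Suc ` ({..<m} - {L})"
    by (simp add: image_set_diff image_Suc_lessThan)
  ultimately show ?thesis by (simp add: prod.reindex)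
qed

lemma string_end_coeff:
  assumes x: "x \<in> D0 n (S0_blocks N1 k m) \<eta>"
    and kr: "koorn_regular n hb x" and gr: "gk_regular N1 m hb \<eta> (coordmap N1 k m x)"
    and L: "L < m" and r0: "r0 < k" and \<epsilon>: "\<epsilon> \<in> {1, -1}"
    and X_eq: "X = complex_of_real \<epsilon> * x (N1 + k*L + r0 + 1)"
    and own: "(\<Prod>r\<in>{..<k} - {r0}. g (X - x (N1 + k*L + r + 1)) t1 1 * g (X + x (N1 + k*L + r + 1)) t1 1)
            = (\<Prod>j<k-1. g (of_nat (Suc j) * \<eta>) (exp (\<eta>/2)) 1 * g (2*X - of_nat (Suc j) * \<eta>) (exp (\<eta>/2)) 1)"
    and own_nz: "\<forall>j<k-1. exp (2*X - of_nat (Suc j) * \<eta>) \<noteq> 1"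
    and centre: "complex_of_real \<epsilon> * coordmap N1 k m x (N1 + Suc L) = X - (of_nat k - 1) * \<eta> / 2"
  shows "koorn_C n hb t0 t1 tn u0 un (N1 + k*L + r0 + 1) \<epsilon> x
       = inverse (t0 * tn) * (c_B * gen_B t0 tn u0 un (Suc L) \<epsilon> x)"
proof -
  define p where "p = N1 + k*L + r0 + 1"
  define e where "e = complex_of_real \<epsilon>"
  define z where "z = coordmap N1 k m x"
  define Y where "Y = X - (of_nat k - 1) * \<eta> / 2"
  define F where "F j = g (X - x j) t1 1 * g (X + x j) t1 1" for j
  have pn: "p \<in> {1..n}" using site_le[OF L r0, of N1] n_eq p_def by auto
  have reg: "\<forall>j\<in>{1..n} - {p}. exp (X - x j) \<noteq> 1 \<and> exp (X + x j) \<noteq> 1"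
    using koorn_regular_D(1)[OF kr pn \<epsilon>] unfolding X_eq p_def .
  have E1: "1 - exp (2*X) \<noteq> 0"
    using koorn_regular_D(2)[OF kr pn \<epsilon>] unfolding X_eq p_def .
  have V: "1 - (inverse (exp (\<eta>/2)))^2 * exp (2*Y) \<noteq> 0" "1 - exp (2*Y) \<noteq> 0"
    using gk_regular_y_D[OF gr _ \<epsilon>, of "Suc L"] L unfolding centre Y_def by auto
  have ez: "e * z (N1 + Suc L) = Y" using centre e_def z_def Y_def by simp
  \<comment> \<open>the rest of its own string produces c_B and the denominators of B\<close>
  have self_part: "(\<Prod>r\<in>{..<k} - {r0}. F (N1 + k*L + r + 1)) / ((1 - (inverse (exp (hb/2)))^2 * exp (2*X)) * (1 - exp (2*X)))
     = c_B / ((1 - (inverse (exp (\<eta>/2)))^2 * exp (2*Y)) * (1 - exp (2*Y)))"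
    unfolding F_def own Y_def
    by (rule string_self_factor[OF hb_eq k_ge_2 eta_nonresonant own_nz]) (use E1 V Y_def in auto)
  have linear: "1 - A * exp (hb/2) * inverse (exp (\<eta>/2)) * exp Y = 1 - A * exp X" for A
  proof -
    have "hb/2 - \<eta>/2 + Y = X" by (simp add: Y_def hb_eq field_simps)
    then have "exp (hb/2) * inverse (exp (\<eta>/2)) * exp Y = exp X"
      by (metis exp_add exp_diff divide_inverse)
    then show ?thesis by (simp add: mult.assoc)
  qed
  have Xp: "e * x p = X" using X_eq e_def p_def by simp
  show ?thesis
    unfolding koorn_C_def gk_B_def Let_def e_def[symmetric] z_def[symmetric] p_def[symmetric]
      mult.assoc[of 2 e] Xp ez F_def[symmetric]
    unfolding prod_except_string_site[OF L r0, folded p_def]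
      free_sites_from_string_end[OF L r0 reg[unfolded p_def], folded F_def z_def Y_def]
      other_strings_from_string_end[OF x L r0 reg[unfolded p_def], folded F_def z_def Y_def] linear
    by (rule string_end_algebra) (use self_part in \<open>simp_all add: mult.assoc\<close>)
qed

end

lemma koorn_C_zero:
  assumes j: "j \<in> {1..n} - {p}"
    and zero: "g (complex_of_real \<epsilon> * x p - x j) t1 1 = 0 \<or> g (complex_of_real \<epsilon> * x p + x j) t1 1 = 0"
  shows "koorn_C n hb t0 t1 tn u0 un p \<epsilon> x = 0"
proof -
  have "(\<Prod>j\<in>{1..n} - {p}. g (complex_of_real \<epsilon> * x p - x j) t1 1 * g (complex_of_real \<epsilon> * x p + x j) t1 1) = 0"
    using j zero by (subst prod_zero_iff) auto
  then show ?thesis unfolding koorn_C_def Let_def by simp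
qed

context koornwinder_restriction
begin

text \<open>The factor that kills the interior coefficients of a string.\<close>
lemma g_minus_eta_zero: "g (- \<eta>) t1 1 = 0"
proof -
  have "exp \<eta> = exp (\<eta>/2) * exp (\<eta>/2)" by (simp add: mult_exp_exp)
  then have "t1 * exp (- \<eta>) - inverse t1 = 0" unfolding t1_eq by (simp add: exp_minus field_simps)
  then show ?thesis by (simp add: g_def)
qed

text \<open>Within a string every coefficient vanishes except the one at the end point facing
  the shift direction, because its neighbour contributes a factor g(-eta; t1, 1) = 0.\<close>
lemma string_coeff_vanishes:
  assumes x: "x \<in> D0 n (S0_blocks N1 k m) \<eta>" and L: "L < m" and \<epsilon>: "\<epsilon> \<in> {1, -1}"
    and r: "r < k" "r \<noteq> (if \<epsilon> = 1 then 0 else k - 1)"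
  shows "koorn_C n hb t0 t1 tn u0 un (N1 + k*L + r + 1) \<epsilon> x = 0"
proof -
  have site_n: "N1 + k*L + r' + 1 \<in> {1..n}" if "r' < k" for r'
    using site_le[OF L that, of N1] n_eq by auto
  have string: "x (N1 + k*L + r' + 1) = x (N1 + k*L + 1) - of_nat r' * \<eta>" if "r' < k" for r'
    by (rule D0_string[OF x L that])
  consider "\<epsilon> = 1" | "\<epsilon> = -1" using \<epsilon> by blast
  then show ?thesis
  proof cases
    case 1
    then obtain r' where r': "r = Suc r'" using r by (cases r) auto
    show ?thesis
    proof (rule koorn_C_zero)
      show "N1 + k*L + r' + 1 \<in> {1..n} - {N1 + k*L + r + 1}" using site_n[of r'] r r' by auto
      have "r' < k" using r r' by simp
      then have "x (N1 + k*L + r + 1) - x (N1 + k*L + r' + 1) = - \<eta>"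
        unfolding string[OF r(1)] string[OF \<open>r' < k\<close>] using r' by (simp add: algebra_simps)
      then show "g (complex_of_real \<epsilon> * x (N1 + k*L + r + 1) - x (N1 + k*L + r' + 1)) t1 1 = 0 \<or>
                 g (complex_of_real \<epsilon> * x (N1 + k*L + r + 1) + x (N1 + k*L + r' + 1)) t1 1 = 0"
        using 1 g_minus_eta_zero by simp
    qed
  next
    case 2
    have r1: "Suc r < k" using r 2 by auto
    show ?thesis
    proof (rule koorn_C_zero)
      show "N1 + k*L + Suc r + 1 \<in> {1..n} - {N1 + k*L + r + 1}" using site_n[OF r1] by auto
      have "- x (N1 + k*L + r + 1) + x (N1 + k*L + Suc r + 1) = - \<eta>"
        unfolding string[OF r(1)] string[OF r1] by (simp add: algebra_simps)
      then show "g (complex_of_real \<epsilon> * x (N1 + k*L + r + 1) - x (N1 + k*L + Suc r + 1)) t1 1 = 0 \<or>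
                 g (complex_of_real \<epsilon> * x (N1 + k*L + r + 1) + x (N1 + k*L + Suc r + 1)) t1 1 = 0"
        using 2 g_minus_eta_zero by simp
    qed
  qed
qed

lemma string_left_end_coeff:
  assumes x: "x \<in> D0 n (S0_blocks N1 k m) \<eta>"
    and kr: "koorn_regular n hb x" and gr: "gk_regular N1 m hb \<eta> (coordmap N1 k m x)" and L: "L < m"
  shows "koorn_C n hb t0 t1 tn u0 un (N1 + k*L + 0 + 1) 1 x = inverse (t0 * tn) * (c_B * gen_B t0 tn u0 un (Suc L) 1 x)"
proof -
  define X where "X = x (N1 + k*L + 1)"
  have k1: "0 < k" using k_ge_2 by simp
  have string: "x (N1 + k*L + Suc j + 1) = X - of_nat (Suc j) * \<eta>" if "j < k - 1" for j
    using D0_string[OF x L, of "Suc j"] that unfolding X_def by simp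
  have reg: "\<forall>j\<in>{1..n} - {N1 + k*L + 0 + 1}. exp (X - x j) \<noteq> 1 \<and> exp (X + x j) \<noteq> 1"
    using koorn_regular_D(1)[OF kr _, of "N1 + k*L + 0 + 1" 1] site_le[OF L k1, of N1] n_eq by (simp add: X_def)
  have rest: "{..<k} - {0} = Suc ` {..<k - 1}"
    using lessThan_Suc_eq_insert_0[of "k - 1"] k1 by auto
  have "(\<Prod>r\<in>{..<k} - {0}. g (X - x (N1 + k*L + r + 1)) t1 1 * g (X + x (N1 + k*L + r + 1)) t1 1)
      = (\<Prod>j<k-1. g (X - x (N1 + k*L + Suc j + 1)) t1 1 * g (X + x (N1 + k*L + Suc j + 1)) t1 1)"
    unfolding rest by (simp add: prod.reindex)
  also have "\<dots> = (\<Prod>j<k-1. g (of_nat (Suc j) * \<eta>) (exp (\<eta>/2)) 1 * g (2*X - of_nat (Suc j) * \<eta>) (exp (\<eta>/2)) 1)"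
  proof (rule prod.cong[OF refl])
    fix j assume "j \<in> {..<k - 1}"
    then have j: "j < k - 1" by simp
    have "X - x (N1 + k*L + Suc j + 1) = of_nat (Suc j) * \<eta>"
      and "X + x (N1 + k*L + Suc j + 1) = 2*X - of_nat (Suc j) * \<eta>"
      unfolding string[OF j] by simp_all
    then show "g (X - x (N1 + k*L + Suc j + 1)) t1 1 * g (X + x (N1 + k*L + Suc j + 1)) t1 1
        = g (of_nat (Suc j) * \<eta>) (exp (\<eta>/2)) 1 * g (2*X - of_nat (Suc j) * \<eta>) (exp (\<eta>/2)) 1"
      unfolding t1_eq by (simp only:)
  qed
  finally have own: "(\<Prod>r\<in>{..<k} - {0}. g (X - x (N1 + k*L + r + 1)) t1 1 * g (X + x (N1 + k*L + r + 1)) t1 1)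
      = (\<Prod>j<k-1. g (of_nat (Suc j) * \<eta>) (exp (\<eta>/2)) 1 * g (2*X - of_nat (Suc j) * \<eta>) (exp (\<eta>/2)) 1)" .
  have own_nz: "\<forall>j<k-1. exp (2*X - of_nat (Suc j) * \<eta>) \<noteq> 1"
  proof (intro allI impI)
    fix j assume j: "j < k - 1"
    have "N1 + k*L + Suc j + 1 \<in> {1..n} - {N1 + k*L + 0 + 1}"
      using site_le[OF L, of "Suc j" k N1] j n_eq by auto
    then have "exp (X + x (N1 + k*L + Suc j + 1)) \<noteq> 1" using reg by blast
    moreover have "X + x (N1 + k*L + Suc j + 1) = 2*X - of_nat (Suc j) * \<eta>"
      unfolding string[OF j] by (simp add: algebra_simps)
    ultimately show "exp (2*X - of_nat (Suc j) * \<eta>) \<noteq> 1" by simp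
  qed
  have centre: "complex_of_real 1 * coordmap N1 k m x (N1 + Suc L) = X - (of_nat k - 1) * \<eta> / 2"
    using coordmap_string_centre[OF x L] k1 by (simp add: X_def)
  show ?thesis
    by (rule string_end_coeff[OF x kr gr L k1 _ _ own own_nz centre]) (simp_all add: X_def)
qed

lemma string_right_end_coeff:
  assumes x: "x \<in> D0 n (S0_blocks N1 k m) \<eta>"
    and kr: "koorn_regular n hb x" and gr: "gk_regular N1 m hb \<eta> (coordmap N1 k m x)" and L: "L < m"
  shows "koorn_C n hb t0 t1 tn u0 un (N1 + k*L + (k - 1) + 1) (-1) x
       = inverse (t0 * tn) * (c_B * gen_B t0 tn u0 un (Suc L) (-1) x)"
proof -
  define f where "f = x (N1 + k*L + 1)"
  define X where "X = - (f - of_nat (k - 1) * \<eta>)"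
  have k1: "k - 1 < k" using k_ge_2 by simp
  have string: "x (N1 + k*L + r + 1) = f - of_nat r * \<eta>" if "r < k" for r
    unfolding f_def by (rule D0_string[OF x L that])
  have X_eq: "X = complex_of_real (-1) * x (N1 + k*L + (k - 1) + 1)"
    using string[OF k1] by (simp add: X_def)
  have reg: "\<forall>j\<in>{1..n} - {N1 + k*L + (k - 1) + 1}. exp (X - x j) \<noteq> 1 \<and> exp (X + x j) \<noteq> 1"
    using koorn_regular_D(1)[OF kr _, of "N1 + k*L + (k - 1) + 1" "-1"] site_le[OF L k1, of N1] n_eq X_eq
    by simp
  have mirror: "x (N1 + k*L + (k - 1 - Suc j) + 1) = - X + of_nat (Suc j) * \<eta>" if "j < k - 1" for j
    using string[of "k - 1 - Suc j"] that by (simp add: X_def of_nat_diff algebra_simps)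
  have "(\<Prod>r\<in>{..<k} - {k - 1}. g (X - x (N1 + k*L + r + 1)) t1 1 * g (X + x (N1 + k*L + r + 1)) t1 1)
      = (\<Prod>r<k - 1. g (X - x (N1 + k*L + r + 1)) t1 1 * g (X + x (N1 + k*L + r + 1)) t1 1)"
    using k1 by (intro prod.cong) auto
  also have "\<dots> = (\<Prod>j<k - 1. g (X - x (N1 + k*L + (k - 1 - Suc j) + 1)) t1 1 * g (X + x (N1 + k*L + (k - 1 - Suc j) + 1)) t1 1)"
    by (rule prod.nat_diff_reindex[symmetric])
  also have "\<dots> = (\<Prod>j<k-1. g (of_nat (Suc j) * \<eta>) (exp (\<eta>/2)) 1 * g (2*X - of_nat (Suc j) * \<eta>) (exp (\<eta>/2)) 1)"
  proof (rule prod.cong[OF refl])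
    fix j assume "j \<in> {..<k - 1}"
    then have j: "j < k - 1" by simp
    have "X - x (N1 + k*L + (k - 1 - Suc j) + 1) = 2*X - of_nat (Suc j) * \<eta>"
      and "X + x (N1 + k*L + (k - 1 - Suc j) + 1) = of_nat (Suc j) * \<eta>"
      unfolding mirror[OF j] by (simp_all add: algebra_simps)
    then show "g (X - x (N1 + k*L + (k - 1 - Suc j) + 1)) t1 1 * g (X + x (N1 + k*L + (k - 1 - Suc j) + 1)) t1 1
        = g (of_nat (Suc j) * \<eta>) (exp (\<eta>/2)) 1 * g (2*X - of_nat (Suc j) * \<eta>) (exp (\<eta>/2)) 1"
      unfolding t1_eq by (simp only: mult.commute)
  qed
  finally have own: "(\<Prod>r\<in>{..<k} - {k - 1}. g (X - x (N1 + k*L + r + 1)) t1 1 * g (X + x (N1 + k*L + r + 1)) t1 1)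
      = (\<Prod>j<k-1. g (of_nat (Suc j) * \<eta>) (exp (\<eta>/2)) 1 * g (2*X - of_nat (Suc j) * \<eta>) (exp (\<eta>/2)) 1)" .
  have own_nz: "\<forall>j<k-1. exp (2*X - of_nat (Suc j) * \<eta>) \<noteq> 1"
  proof (intro allI impI)
    fix j assume j: "j < k - 1"
    have "N1 + k*L + (k - 1 - Suc j) + 1 \<in> {1..n} - {N1 + k*L + (k - 1) + 1}"
      using site_le[OF L, of "k - 1 - Suc j" k N1] j n_eq by auto
    then have "exp (X - x (N1 + k*L + (k - 1 - Suc j) + 1)) \<noteq> 1" using reg by blast
    moreover have "X - x (N1 + k*L + (k - 1 - Suc j) + 1) = 2*X - of_nat (Suc j) * \<eta>"
      unfolding mirror[OF j] by (simp add: algebra_simps)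
    ultimately show "exp (2*X - of_nat (Suc j) * \<eta>) \<noteq> 1" by metis
  qed
  have "(of_nat (k - 1) :: complex) = of_nat k - 1" using k_ge_2 by (simp add: of_nat_diff)
  then have centre: "complex_of_real (-1) * coordmap N1 k m x (N1 + Suc L) = X - (of_nat k - 1) * \<eta> / 2"
    unfolding coordmap_string_centre[OF x L k_ge_1] X_def f_def
    using k_ge_2 by (simp add: field_simps)
  show ?thesis
    by (rule string_end_coeff[OF x kr gr L k1 _ X_eq own own_nz centre]) simp
qed

lemma string_sum_coeff:
  assumes x: "x \<in> D0 n (S0_blocks N1 k m) \<eta>"
    and kr: "koorn_regular n hb x" and gr: "gk_regular N1 m hb \<eta> (coordmap N1 k m x)"
    and L: "L < m" and \<epsilon>: "\<epsilon> \<in> {1, -1}"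
  shows "(\<Sum>r<k. koorn_C n hb t0 t1 tn u0 un (N1 + k*L + r + 1) \<epsilon> x)
       = inverse (t0 * tn) * (c_B * gen_B t0 tn u0 un (Suc L) \<epsilon> x)"
proof -
  define r0 where "r0 = (if \<epsilon> = 1 then 0 else k - 1)"
  have r0: "r0 < k" using k_ge_2 by (simp add: r0_def)
  have "(\<Sum>r<k. koorn_C n hb t0 t1 tn u0 un (N1 + k*L + r + 1) \<epsilon> x)
      = koorn_C n hb t0 t1 tn u0 un (N1 + k*L + r0 + 1) \<epsilon> x
        + (\<Sum>r\<in>{..<k} - {r0}. koorn_C n hb t0 t1 tn u0 un (N1 + k*L + r + 1) \<epsilon> x)"
    using r0 by (subst sum.remove[of _ r0]) auto
  also have "(\<Sum>r\<in>{..<k} - {r0}. koorn_C n hb t0 t1 tn u0 un (N1 + k*L + r + 1) \<epsilon> x) = 0"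
    using string_coeff_vanishes[OF x L \<epsilon>] unfolding r0_def by (intro sum.neutral) blast
  also have "koorn_C n hb t0 t1 tn u0 un (N1 + k*L + r0 + 1) \<epsilon> x
      = inverse (t0 * tn) * (c_B * gen_B t0 tn u0 un (Suc L) \<epsilon> x)"
  proof -
    consider "\<epsilon> = 1" | "\<epsilon> = -1" using \<epsilon> by blast
    then show ?thesis
    proof cases
      case 1
      then show ?thesis using string_left_end_coeff[OF x kr gr L] by (simp add: r0_def)
    next
      case 2
      then show ?thesis using string_right_end_coeff[OF x kr gr L] by (simp add: r0_def)
    qed
  qed
  finally show ?thesis by simp
qed

end

section \<open>Collecting the coefficients\<close>

lemma sum_filter_point_masses:
  fixes C :: "'i \<Rightarrow> 'e \<Rightarrow> 'b::comm_ring_1" and u :: "'i \<Rightarrow> 'e \<Rightarrow> 'a"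
  assumes S: "finite S" and I: "finite I" and E: "finite E"
    and u: "\<And>i e. i \<in> I \<Longrightarrow> e \<in> E \<Longrightarrow> u i e \<in> S" and z: "z \<in> S"
  shows "(\<Sum>lam\<in>S. if P lam then (\<Sum>i\<in>I. \<Sum>e\<in>E. if lam = u i e then C i e else 0) + (if lam = z then Z else 0) else 0)
       = (\<Sum>i\<in>I. \<Sum>e\<in>E. if P (u i e) then C i e else 0) + (if P z then Z else 0)"
proof -
  have pointwise: "(if P lam then (\<Sum>i\<in>I. \<Sum>e\<in>E. if lam = u i e then C i e else 0) + (if lam = z then Z else 0) else 0)
     = (\<Sum>i\<in>I. \<Sum>e\<in>E. if lam = u i e then (if P (u i e) then C i e else 0) else 0)
       + (if lam = z then (if P z then Z else 0) else 0)" for lam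
    by (cases "P lam") (auto intro!: sum.cong sum.neutral)
  have "(\<Sum>lam\<in>S. \<Sum>i\<in>I. \<Sum>e\<in>E. if lam = u i e then (if P (u i e) then C i e else 0) else 0)
      = (\<Sum>i\<in>I. \<Sum>e\<in>E. \<Sum>lam\<in>S. if lam = u i e then (if P (u i e) then C i e else 0) else 0)"
    by (subst sum.swap) (simp add: sum.swap[of _ S])
  also have "\<dots> = (\<Sum>i\<in>I. \<Sum>e\<in>E. if P (u i e) then C i e else 0)"
    using u S by (intro sum.cong refl) (simp add: sum.delta)
  finally show ?thesis
    unfolding pointwise sum.distrib using z S by (simp add: sum.delta)
qed

lemma finite_koorn_supp: "finite (koorn_supp n)"
proof -
  have "koorn_supp n \<subseteq> (\<lambda>(i,\<epsilon>). unitv i \<epsilon>) ` ({1..n} \<times> {1, -1}) \<union> {\<lambda>_. 0}"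
    unfolding koorn_supp_def by auto
  then show ?thesis by (rule finite_subset) simp
qed

lemma restrict_coeff_koorn_op:
  "restrict_coeff n S0 (koorn_supp n) (koorn_op n hb t0 t1 tn u0 un) lam' x
     = (\<Sum>i\<in>{1..n}. \<Sum>\<epsilon>\<in>{1,-1}. if proj n S0 (unitv i \<epsilon>) = lam' then koorn_C n hb t0 t1 tn u0 un i \<epsilon> x else 0)
       + (if proj n S0 (\<lambda>_. 0) = lam'
          then kappa_t n t0 t1 tn - (\<Sum>i\<in>{1..n}. \<Sum>\<epsilon>\<in>{1,-1}. koorn_C n hb t0 t1 tn u0 un i \<epsilon> x) else 0)"
  unfolding restrict_coeff_def sum.inter_filter[OF finite_koorn_supp] koorn_op_def
  by (rule sum_filter_point_masses[OF finite_koorn_supp]) (auto simp: koorn_supp_def)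

context koornwinder_restriction
begin

lemma weighted_coeff_sum:
  fixes W :: "(nat \<Rightarrow> real) \<Rightarrow> complex"
  assumes x: "x \<in> D0 n (S0_blocks N1 k m) \<eta>"
    and kr: "koorn_regular n hb x" and gr: "gk_regular N1 m hb \<eta> (coordmap N1 k m x)"
  shows "(\<Sum>i\<in>{1..n}. \<Sum>\<epsilon>\<in>{1,-1}. W (proj n (S0_blocks N1 k m) (unitv i \<epsilon>)) * koorn_C n hb t0 t1 tn u0 un i \<epsilon> x)
   = (\<Sum>i\<in>{1..N1}. \<Sum>\<epsilon>\<in>{1,-1}. W (unitv i \<epsilon>) * (inverse (t0 * tn) * gen_A t0 tn u0 un i \<epsilon> x))
   + (\<Sum>L<m. \<Sum>\<epsilon>\<in>{1,-1}. W (block_avg N1 k L \<epsilon>) * (inverse (t0 * tn) * (c_B * gen_B t0 tn u0 un (Suc L) \<epsilon> x)))"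
proof -
  define P where "P = proj n (S0_blocks N1 k m)"
  define C where "C i \<epsilon> = koorn_C n hb t0 t1 tn u0 un i \<epsilon> x" for i \<epsilon>
  have x_sites: "(\<Sum>i\<in>{1..N1}. \<Sum>\<epsilon>\<in>{1,-1}. W (P (unitv i \<epsilon>)) * C i \<epsilon>)
     = (\<Sum>i\<in>{1..N1}. \<Sum>\<epsilon>\<in>{1,-1}. W (unitv i \<epsilon>) * (inverse (t0 * tn) * gen_A t0 tn u0 un i \<epsilon> x))"
    by (intro sum.cong refl) (simp add: P_def C_def proj_unitv x_site_coeff[OF x kr])
  have string: "(\<Sum>r<k. \<Sum>\<epsilon>\<in>{1,-1}. W (P (unitv (N1 + k*L + r + 1) \<epsilon>)) * C (N1 + k*L + r + 1) \<epsilon>)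
     = (\<Sum>\<epsilon>\<in>{1,-1}. W (block_avg N1 k L \<epsilon>) * (inverse (t0 * tn) * (c_B * gen_B t0 tn u0 un (Suc L) \<epsilon> x)))"
    if L: "L < m" for L
  proof -
    have "(\<Sum>r<k. \<Sum>\<epsilon>\<in>{1,-1}. W (P (unitv (N1 + k*L + r + 1) \<epsilon>)) * C (N1 + k*L + r + 1) \<epsilon>)
        = (\<Sum>\<epsilon>\<in>{1,-1}. W (block_avg N1 k L \<epsilon>) * (\<Sum>r<k. C (N1 + k*L + r + 1) \<epsilon>))"
    proof -
      have "P (unitv (N1 + k*L + r + 1) \<epsilon>) = block_avg N1 k L \<epsilon>" if "r < k" for r \<epsilon>
        unfolding P_def by (rule proj_string_site[OF L that])
      then show ?thesis
        unfolding sum_distrib_left by (subst sum.swap, intro sum.cong refl) simp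
    qed
    then show ?thesis
      unfolding C_def using string_sum_coeff[OF x kr gr L] by simp
  qed
  have "(\<Sum>i\<in>{1..n}. \<Sum>\<epsilon>\<in>{1,-1}. W (P (unitv i \<epsilon>)) * C i \<epsilon>)
      = (\<Sum>i\<in>{1..N1}. \<Sum>\<epsilon>\<in>{1,-1}. W (P (unitv i \<epsilon>)) * C i \<epsilon>)
        + (\<Sum>L<m. \<Sum>r<k. \<Sum>\<epsilon>\<in>{1,-1}. W (P (unitv (N1 + k*L + r + 1) \<epsilon>)) * C (N1 + k*L + r + 1) \<epsilon>)"
    unfolding n_eq by (rule sum.blocks_split)
  also have "\<dots> = (\<Sum>i\<in>{1..N1}. \<Sum>\<epsilon>\<in>{1,-1}. W (unitv i \<epsilon>) * (inverse (t0 * tn) * gen_A t0 tn u0 un i \<epsilon> x))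
      + (\<Sum>L<m. \<Sum>\<epsilon>\<in>{1,-1}. W (block_avg N1 k L \<epsilon>) * (inverse (t0 * tn) * (c_B * gen_B t0 tn u0 un (Suc L) \<epsilon> x)))"
    unfolding x_sites using string by simp
  finally show ?thesis unfolding P_def C_def .
qed

lemma gk_op_at_shift:
  assumes lam: "lam' \<in> Vbar n (S0_blocks N1 k m)"
  shows "gk_op N1 m hb \<eta>
              (t0 * u0 * inverse (exp (hb / 2))) (- (t0 * inverse u0 * inverse (exp (hb / 2))))
              (tn * un) (- (tn * inverse un))
              (shift_coords N1 k m hb lam') (coordmap N1 k m x)
     = (\<Sum>i\<in>{1..N1}. \<Sum>\<epsilon>\<in>{1,-1}. if lam' = unitv i \<epsilon> then gen_A t0 tn u0 un i \<epsilon> x else 0)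
     + (\<Sum>L<m. \<Sum>\<epsilon>\<in>{1,-1}. if lam' = block_avg N1 k L \<epsilon> then c_B * gen_B t0 tn u0 un (Suc L) \<epsilon> x else 0)
     + (if lam' = (\<lambda>_. 0)
        then - (\<Sum>i\<in>{1..N1}. \<Sum>\<epsilon>\<in>{1,-1}. gen_A t0 tn u0 un i \<epsilon> x)
             - c_B * (\<Sum>L<m. \<Sum>\<epsilon>\<in>{1,-1}. gen_B t0 tn u0 un (Suc L) \<epsilon> x)
        else 0)"
proof -
  have x_part: "(\<Sum>i\<in>{1..N1}. \<Sum>\<epsilon>\<in>{1,-1}.
        if shift_coords N1 k m hb lam' = unitv i (complex_of_real \<epsilon> * hb) then gen_A t0 tn u0 un i \<epsilon> x else 0)
     = (\<Sum>i\<in>{1..N1}. \<Sum>\<epsilon>\<in>{1,-1}. if lam' = unitv i \<epsilon> then gen_A t0 tn u0 un i \<epsilon> x else 0)"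
    by (intro sum.cong refl) (simp add: shift_coords_eq_x_shift_iff[OF lam])
  have y_part: "(\<Sum>l\<in>{1..m}. \<Sum>\<epsilon>\<in>{1,-1}.
        if shift_coords N1 k m hb lam' = unitv (N1 + l) (complex_of_real \<epsilon> * \<eta>) then c_B * gen_B t0 tn u0 un l \<epsilon> x else 0)
     = (\<Sum>L<m. \<Sum>\<epsilon>\<in>{1,-1}. if lam' = block_avg N1 k L \<epsilon> then c_B * gen_B t0 tn u0 un (Suc L) \<epsilon> x else 0)"
    unfolding sum.atLeast1_atMost_eq[of _ m, unfolded One_nat_def[symmetric]]
  proof (intro sum.cong refl)
    fix L \<epsilon> assume "L \<in> {..<m}"
    then show "(if shift_coords N1 k m hb lam' = unitv (N1 + Suc L) (complex_of_real \<epsilon> * \<eta>)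
                then c_B * gen_B t0 tn u0 un (Suc L) \<epsilon> x else 0)
             = (if lam' = block_avg N1 k L \<epsilon> then c_B * gen_B t0 tn u0 un (Suc L) \<epsilon> x else 0)"
      using shift_coords_eq_y_shift_iff[OF lam, of L \<epsilon>] by simp
  qed
  show ?thesis
    unfolding gk_op_def Let_def x_part y_part shift_coords_eq_zero_iff[OF lam]
      sum.atLeast1_atMost_eq[of "\<lambda>l. \<Sum>\<epsilon>\<in>{1,-1}. gen_B t0 tn u0 un l \<epsilon> x" m, unfolded One_nat_def[symmetric]]
    ..
qed

lemma fibre_coeff_sum:
  assumes x: "x \<in> D0 n (S0_blocks N1 k m) \<eta>"
    and kr: "koorn_regular n hb x" and gr: "gk_regular N1 m hb \<eta> (coordmap N1 k m x)"
  shows "(\<Sum>i\<in>{1..n}. \<Sum>\<epsilon>\<in>{1,-1}.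
            if proj n (S0_blocks N1 k m) (unitv i \<epsilon>) = lam' then koorn_C n hb t0 t1 tn u0 un i \<epsilon> x else 0)
       = inverse (t0 * tn) *
           ((\<Sum>i\<in>{1..N1}. \<Sum>\<epsilon>\<in>{1,-1::real}. if lam' = unitv i \<epsilon> then gen_A t0 tn u0 un i \<epsilon> x else 0)
          + (\<Sum>L<m. \<Sum>\<epsilon>\<in>{1,-1::real}.
               if lam' = block_avg N1 k L \<epsilon> then c_B * gen_B t0 tn u0 un (Suc L) \<epsilon> x else 0))"
proof -
  have scale: "(if P then 1 else 0) * (c * a) = c * (if P then a else 0)" for P and a c :: complex
    by simp
  have "(\<Sum>i\<in>{1..n}. \<Sum>\<epsilon>\<in>{1,-1}.
          if proj n (S0_blocks N1 k m) (unitv i \<epsilon>) = lam' then koorn_C n hb t0 t1 tn u0 un i \<epsilon> x else 0)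
      = (\<Sum>i\<in>{1..n}. \<Sum>\<epsilon>\<in>{1,-1::real}.
          (if lam' = proj n (S0_blocks N1 k m) (unitv i \<epsilon>) then 1 else 0) * koorn_C n hb t0 t1 tn u0 un i \<epsilon> x)"
    by (intro sum.cong refl) auto
  also have "\<dots> = (\<Sum>i\<in>{1..N1}. \<Sum>\<epsilon>\<in>{1,-1::real}.
          (if lam' = unitv i \<epsilon> then 1 else 0) * (inverse (t0 * tn) * gen_A t0 tn u0 un i \<epsilon> x))
      + (\<Sum>L<m. \<Sum>\<epsilon>\<in>{1,-1::real}.
          (if lam' = block_avg N1 k L \<epsilon> then 1 else 0) * (inverse (t0 * tn) * (c_B * gen_B t0 tn u0 un (Suc L) \<epsilon> x)))"
    by (rule weighted_coeff_sum[OF x kr gr])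
  finally show ?thesis
    unfolding scale by (simp add: sum_distrib_left distrib_left)
qed

lemma restriction_coeff_eq:
  assumes x: "x \<in> D0 n (S0_blocks N1 k m) \<eta>"
    and kr: "koorn_regular n hb x" and gr: "gk_regular N1 m hb \<eta> (coordmap N1 k m x)"
    and lam: "lam' \<in> Vbar n (S0_blocks N1 k m)"
  shows "restrict_coeff n (S0_blocks N1 k m) (koorn_supp n) (koorn_op n hb t0 t1 tn u0 un) lam' x =
          inverse (t0 * tn) *
            gk_op N1 m hb \<eta>
              (t0 * u0 * inverse (exp (hb / 2))) (- (t0 * inverse u0 * inverse (exp (hb / 2))))
              (tn * un) (- (tn * inverse un))
              (coordmap N1 k m (\<lambda>j. hb * complex_of_real (lam' j))) (coordmap N1 k m x)
          + (if lam' = (\<lambda>_. 0) then kappa_t n t0 t1 tn else 0)"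
proof -
  define XA where "XA = (\<Sum>i\<in>{1..N1}. \<Sum>\<epsilon>\<in>{1,-1::real}. if lam' = unitv i \<epsilon> then gen_A t0 tn u0 un i \<epsilon> x else 0)"
  define XB where "XB = (\<Sum>L<m. \<Sum>\<epsilon>\<in>{1,-1::real}.
                    if lam' = block_avg N1 k L \<epsilon> then c_B * gen_B t0 tn u0 un (Suc L) \<epsilon> x else 0)"
  define TA where "TA = (\<Sum>i\<in>{1..N1}. \<Sum>\<epsilon>\<in>{1,-1::real}. gen_A t0 tn u0 un i \<epsilon> x)"
  define TB where "TB = (\<Sum>L<m. \<Sum>\<epsilon>\<in>{1,-1::real}. c_B * gen_B t0 tn u0 un (Suc L) \<epsilon> x)"
  have total: "(\<Sum>i\<in>{1..n}. \<Sum>\<epsilon>\<in>{1,-1}. koorn_C n hb t0 t1 tn u0 un i \<epsilon> x) = inverse (t0 * tn) * (TA + TB)"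
    using weighted_coeff_sum[OF x kr gr, of "\<lambda>_. 1" t0 tn u0 un, unfolded mult.left_neutral]
    unfolding TA_def TB_def by (simp add: sum_distrib_left distrib_left)
  have "restrict_coeff n (S0_blocks N1 k m) (koorn_supp n) (koorn_op n hb t0 t1 tn u0 un) lam' x
     = inverse (t0 * tn) * (XA + XB)
       + (if lam' = (\<lambda>_. 0) then kappa_t n t0 t1 tn - inverse (t0 * tn) * (TA + TB) else 0)"
    unfolding restrict_coeff_koorn_op fibre_coeff_sum[OF x kr gr] total XA_def[symmetric] XB_def[symmetric]
    using proj_zero by auto
  moreover have "gk_op N1 m hb \<eta>
              (t0 * u0 * inverse (exp (hb / 2))) (- (t0 * inverse u0 * inverse (exp (hb / 2))))
              (tn * un) (- (tn * inverse un))
              (coordmap N1 k m (\<lambda>j. hb * complex_of_real (lam' j))) (coordmap N1 k m x)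
     = XA + XB + (if lam' = (\<lambda>_. 0) then - TA - TB else 0)"
  proof -
    have "TB = c_B * (\<Sum>L<m. \<Sum>\<epsilon>\<in>{1,-1::real}. gen_B t0 tn u0 un (Suc L) \<epsilon> x)"
      unfolding TB_def by (simp only: sum_distrib_left)
    then show ?thesis
      using gk_op_at_shift[OF lam, of t0 u0 tn un x, unfolded shift_coords_def]
      unfolding XA_def XB_def TA_def by simp
  qed
  ultimately show ?thesis by (simp add: algebra_simps)
qed


end

section \<open>Density of regular points\<close>

text \<open>Along a real line t \<mapsto> Z0 + t r (r \<noteq> 0) the value A exp(Z0 + t r) is attained at most once,
  so any inequality of this form holds for all small t > 0.\<close>
lemma eventually_exp_affine_ne:
  fixes A B Z0 :: complex and r :: real
  assumes r: "r \<noteq> 0" and AB: "A \<noteq> 0 \<or> B \<noteq> 0"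
  shows "\<forall>\<^sub>F t in at_right 0. A * exp (Z0 + complex_of_real (t * r)) \<noteq> B"
proof (cases "A = 0")
  case True then show ?thesis using AB by simp
next
  case A: False
  show ?thesis
  proof (cases "\<exists>t0. A * exp (Z0 + complex_of_real (t0 * r)) = B")
    case False then show ?thesis by simp
  next
    case True
    then obtain t0 where t0: "A * exp (Z0 + complex_of_real (t0 * r)) = B" by blast
    have nz: "A * exp (Z0 + complex_of_real (t * r)) \<noteq> B" if "t \<noteq> t0" for t
    proof
      assume "A * exp (Z0 + complex_of_real (t * r)) = B"
      then have "A * exp (Z0 + complex_of_real (t * r)) = A * exp (Z0 + complex_of_real (t0 * r))"
        using t0 by simp
      then have "exp (Z0 + complex_of_real (t * r)) = exp (Z0 + complex_of_real (t0 * r))"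
        using A by simp
      then have "cmod (exp (Z0 + complex_of_real (t * r))) = cmod (exp (Z0 + complex_of_real (t0 * r)))"
        by simp
      then have "t * r = t0 * r" by simp
      then show False using that r by simp
    qed
    have "\<forall>\<^sub>F t in at_right 0. t \<noteq> t0" by (rule eventually_neq_at_within)
    then show ?thesis by (rule eventually_mono) (rule nz)
  qed
qed

lemma eventually_gden_ne_0:
  assumes W: "\<And>t. W t = Z0 + complex_of_real (t * r)" and r: "r \<noteq> 0" and b: "b \<noteq> 0"
  shows "\<forall>\<^sub>F t in at_right 0. gden (W t) b \<noteq> 0"
  using eventually_exp_affine_ne[OF r, of b "inverse b" Z0] b by (simp add: gden_def W)

lemma eventually_one_minus_exp_ne_0:
  assumes W: "\<And>t. W t = Z0 + complex_of_real (t * r)" and r: "r \<noteq> 0"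
  shows "\<forall>\<^sub>F t in at_right 0. 1 - C * exp (W t) \<noteq> 0"
  using eventually_exp_affine_ne[OF r, of C 1 Z0] by (simp add: W)

text \<open>The weight of a site is the index of its variable in (x_1, ..., x_N1, y_1, ..., y_m):
  distinct variables get distinct positive weights and all sites of a string share one.\<close>
definition (in string_blocks) weight :: "nat \<Rightarrow> real" where
  "weight j = (if 1 \<le> j \<and> j \<le> N1 then real j
               else if N1 < j \<and> j \<le> n then real (N1 + (j - N1 - 1) div k + 1) else 0)"

context string_blocks
begin

lemma weight_site: assumes "L < m" "r < k" shows "weight (N1 + k*L + r + 1) = real (N1 + L + 1)"
proof -
  have "N1 + k*L + r + 1 \<le> n" using site_le[OF assms, of N1] n_eq by simp
  moreover have "(k*L + r) div k = L" using assms by simp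
  ultimately show ?thesis unfolding weight_def by simp
qed

lemma weight_pos: assumes "j \<in> {1..n}" shows "weight j \<ge> 1"
  using assms unfolding weight_def by auto

lemma weight_le: assumes "j \<in> {1..n}" shows "weight j \<le> real (N1 + m)"
proof (cases "j \<le> N1")
  case True then show ?thesis using assms unfolding weight_def by auto
next
  case False
  then have "N1 < j" "j \<le> n" using assms by simp_all
  then obtain L r where "L < m" "r < k" "j = N1 + k*L + r + 1" by (rule site_cases)
  then show ?thesis using weight_site by simp
qed

lemma weight_outside: assumes "j \<notin> {1..n}" shows "weight j = 0"
  using assms n_eq unfolding weight_def by auto

lemma weight_eq_same_string:
  assumes i: "i \<in> {1..n}" and j: "j \<in> {1..n}" and weights: "weight i = weight j"
  obtains "i = j" | L r r' where "L < m" "r < k" "r' < k"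
    "i = N1 + k*L + r + 1" "j = N1 + k*L + r' + 1"
proof -
  have site_weight_gt: "weight (N1 + k*L + r + 1) > real N1" if "L < m" "r < k" for L r
    using weight_site[OF that] by simp
  consider "i \<le> N1" "j \<le> N1" | "i \<le> N1" "N1 < j" | "N1 < i" "j \<le> N1" | "N1 < i" "N1 < j"
    by linarith
  then show ?thesis
  proof cases
    case 1
    then have "real i = real j" using weights i j by (simp add: weight_def)
    then show ?thesis using that(1) by simp
  next
    case 2
    moreover have "j \<le> n" using j by simp
    ultimately obtain L r where "L < m" "r < k" "j = N1 + k*L + r + 1" by (metis site_cases)
    then have "weight j > real N1" using site_weight_gt by simp
    moreover have "weight i \<le> real N1" using i 2 by (simp add: weight_def)
    ultimately have False using weights by simp
    then show ?thesis ..
  next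
    case 3
    moreover have "i \<le> n" using i by simp
    ultimately obtain L r where "L < m" "r < k" "i = N1 + k*L + r + 1" by (metis site_cases)
    then have "weight i > real N1" using site_weight_gt by simp
    moreover have "weight j \<le> real N1" using j 3 by (simp add: weight_def)
    ultimately have False using weights by simp
    then show ?thesis ..
  next
    case 4
    have "i \<le> n" "j \<le> n" using i j by simp_all
    obtain L r where L: "L < m" "r < k" "i = N1 + k*L + r + 1"
      using 4 \<open>i \<le> n\<close> by (metis site_cases)
    obtain L' r' where L': "L' < m" "r' < k" "j = N1 + k*L' + r' + 1"
      using 4 \<open>j \<le> n\<close> by (metis site_cases)
    have "L = L'" using weights weight_site[OF L(1,2)] weight_site[OF L'(1,2)] L(3) L'(3) by simp
    then show ?thesis using that(2) L L' by blast
  qed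
qed

end

locale perturbation = koornwinder_restriction +
  fixes x :: "nat \<Rightarrow> complex"
  assumes x_in_D0: "x \<in> D0 n (S0_blocks N1 k m) \<eta>"
begin

definition perturb :: "real \<Rightarrow> nat \<Rightarrow> complex" where
  "perturb t j = x j + complex_of_real (t * weight j)"

text \<open>The perturbation stays in D0, since the weight is constant on blocks.\<close>
lemma perturb_in_D0: "perturb t \<in> D0 n (S0_blocks N1 k m) \<eta>"
  unfolding D0_def
proof (intro CollectI conjI allI impI)
  fix j assume "j \<notin> {1..n}"
  then show "perturb t j = 0" using x_in_D0 weight_outside unfolding D0_def perturb_def by simp
next
  fix p assume p: "simple_root p \<in> S0_blocks N1 k m"
  then obtain L r where Lr: "L < m" "Suc r < k" "p = N1 + k*L + r + 1"
    using S0_blocks_simple_root_iff by blast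
  have "weight p = weight (Suc p)" using weight_site[of L r] weight_site[of L "Suc r"] Lr by simp
  moreover have "x p - x (Suc p) = \<eta>" using x_in_D0 p unfolding D0_def by blast
  ultimately show "perturb t p - perturb t (Suc p) = \<eta>" unfolding perturb_def by simp
qed

lemma coordmap_perturb:
  assumes a: "a \<in> {1..N1 + m}"
  shows "coordmap N1 k m (perturb t) a = coordmap N1 k m x a + complex_of_real (t * real a)"
proof (cases "a \<le> N1")
  case True then show ?thesis using a by (simp add: coordmap_def perturb_def weight_def)
next
  case False
  define L where "L = a - N1 - 1"
  have L: "L < m" and aL: "a = N1 + Suc L" using False a L_def by auto
  have "(\<Sum>r<k. perturb t (N1 + k*L + r + 1)) = (\<Sum>r<k. x (N1 + k*L + r + 1) + complex_of_real (t * real a))"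
  proof (rule sum.cong[OF refl])
    fix r assume "r \<in> {..<k}"
    then have "weight (N1 + k*L + r + 1) = real a" using weight_site[OF L] aL by simp
    then show "perturb t (N1 + k*L + r + 1) = x (N1 + k*L + r + 1) + complex_of_real (t * real a)"
      unfolding perturb_def by simp
  qed
  then show ?thesis
    unfolding aL coordmap_block_sum[OF L] using k_ge_2 by (simp add: sum.distrib field_simps)
qed

text \<open>Pairwise denominators of the Koornwinder coefficients: they move with t unless the two
  sites lie on one string, where genericity of eta keeps them nonzero.\<close>
lemma eventually_koorn_pair:
  assumes i: "i \<in> {1..n}" and j: "j \<in> {1..n} - {i}" and \<epsilon>: "\<epsilon> \<in> {1, -1::real}"
  shows "\<forall>\<^sub>F t in at_right 0. gden (complex_of_real \<epsilon> * perturb t i - perturb t j) 1 \<noteq> 0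
                            \<and> gden (complex_of_real \<epsilon> * perturb t i + perturb t j) 1 \<noteq> 0"
proof -
  have j': "j \<in> {1..n}" "i \<noteq> j" using j by auto
  have same_string: "\<exists>d::int. d \<noteq> 0 \<and> x i - x j = of_int d * \<eta>" if w: "weight i = weight j"
  proof -
    obtain L r r' where Lr: "L < m" "r < k" "r' < k" "i = N1 + k*L + r + 1" "j = N1 + k*L + r' + 1"
      using weight_eq_same_string[OF i j'(1) w] j'(2) by blast
    then have "x i - x j = of_int (int r' - int r) * \<eta>"
      using D0_string[OF x_in_D0 Lr(1,2)] D0_string[OF x_in_D0 Lr(1,3)] by (simp add: algebra_simps)
    then show ?thesis using Lr j'(2) by (intro exI[of _ "int r' - int r"]) auto
  qed
  define r1 where "r1 = \<epsilon> * weight i - weight j"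
  define r2 where "r2 = \<epsilon> * weight i + weight j"
  have W1: "complex_of_real \<epsilon> * perturb t i - perturb t j = (complex_of_real \<epsilon> * x i - x j) + complex_of_real (t * r1)" for t
    unfolding perturb_def r1_def by (simp add: algebra_simps)
  have W2: "complex_of_real \<epsilon> * perturb t i + perturb t j = (complex_of_real \<epsilon> * x i + x j) + complex_of_real (t * r2)" for t
    unfolding perturb_def r2_def by (simp add: algebra_simps)
  have ui: "weight i \<ge> 1" and uj: "weight j \<ge> 1" using weight_pos i j' by auto
  have minus: "\<forall>\<^sub>F t in at_right 0. gden (complex_of_real \<epsilon> * perturb t i - perturb t j) 1 \<noteq> 0"
  proof (cases "r1 = 0")
    case False then show ?thesis by (rule eventually_gden_ne_0[OF W1]) simp
  next
    case True
    then have "\<epsilon> = 1" "weight i = weight j" using \<epsilon> ui uj unfolding r1_def by auto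
    then obtain d :: int where d: "d \<noteq> 0" "x i - x j = of_int d * \<eta>" using same_string by blast
    then show ?thesis
      using eta_nonresonant[OF d(1)] \<open>\<epsilon> = 1\<close> True unfolding W1 by (intro always_eventually) (simp add: gden_1)
  qed
  have plus: "\<forall>\<^sub>F t in at_right 0. gden (complex_of_real \<epsilon> * perturb t i + perturb t j) 1 \<noteq> 0"
  proof (cases "r2 = 0")
    case False then show ?thesis by (rule eventually_gden_ne_0[OF W2]) simp
  next
    case True
    then have "\<epsilon> = -1" "weight i = weight j" using \<epsilon> ui uj unfolding r2_def by auto
    then obtain d :: int where d: "d \<noteq> 0" "x i - x j = of_int d * \<eta>" using same_string by blast
    then have "- x i + x j = of_int (- d) * \<eta>" by (simp add: algebra_simps)
    then show ?thesis
      using eta_nonresonant[of "- d"] d(1) \<open>\<epsilon> = -1\<close> True unfolding W2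
      by (intro always_eventually) (simp add: gden_1)
  qed
  show ?thesis using minus plus by (rule eventually_conj)
qed

lemma eventually_koorn_single:
  assumes i: "i \<in> {1..n}" and \<epsilon>: "\<epsilon> \<in> {1, -1::real}"
  shows "\<forall>\<^sub>F t in at_right 0. 1 - C * exp (2 * complex_of_real \<epsilon> * perturb t i) \<noteq> 0"
proof (rule eventually_one_minus_exp_ne_0)
  show "2 * complex_of_real \<epsilon> * perturb t i = 2 * complex_of_real \<epsilon> * x i + complex_of_real (t * (2 * \<epsilon> * weight i))" for t
    unfolding perturb_def by (simp add: algebra_simps)
  show "2 * \<epsilon> * weight i \<noteq> 0" using weight_pos[OF i] \<epsilon> by auto
qed

lemma eventually_koorn_regular: "\<forall>\<^sub>F t in at_right 0. koorn_regular n hb (perturb t)"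
  unfolding koorn_regular_def Let_def
proof (intro eventually_ball_finite ballI finite_atLeastAtMost finite.intros)
  fix i \<epsilon> assume i: "i \<in> {1..n}" and \<epsilon>: "\<epsilon> \<in> {1, -1::real}"
  have pairs: "\<forall>\<^sub>F t in at_right 0. \<forall>j\<in>{1..n} - {i}. gden (complex_of_real \<epsilon> * perturb t i - perturb t j) 1 \<noteq> 0
                                     \<and> gden (complex_of_real \<epsilon> * perturb t i + perturb t j) 1 \<noteq> 0"
    by (intro eventually_ball_finite ballI eventually_koorn_pair[OF i _ \<epsilon>]) simp_all
  have "\<forall>\<^sub>F t in at_right 0. 1 - exp (2 * complex_of_real \<epsilon> * perturb t i) \<noteq> 0"
    using eventually_koorn_single[OF i \<epsilon>, of 1] by simp
  then show "\<forall>\<^sub>F t in at_right 0. (\<forall>j\<in>{1..n} - {i}. gden (complex_of_real \<epsilon> * perturb t i - perturb t j) 1 \<noteq> 0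
                                     \<and> gden (complex_of_real \<epsilon> * perturb t i + perturb t j) 1 \<noteq> 0) \<and>
     1 - (inverse (exp (hb / 2)))^2 * exp (2 * complex_of_real \<epsilon> * perturb t i) \<noteq> 0 \<and>
     1 - exp (2 * complex_of_real \<epsilon> * perturb t i) \<noteq> 0"
    by (intro eventually_conj pairs eventually_koorn_single[OF i \<epsilon>])
qed

text \<open>In (x, y) coordinates distinct variables move with distinct speeds.\<close>
lemma eventually_gden_coords:
  assumes a: "a \<in> {1..N1 + m}" and b: "b \<in> {1..N1 + m}" and ab: "a \<noteq> b"
    and \<epsilon>: "\<epsilon> \<in> {1, -1::real}" and \<sigma>: "\<sigma> \<in> {1, -1::real}" and c: "c \<noteq> 0"
  shows "\<forall>\<^sub>F t in at_right 0.
           gden (complex_of_real \<epsilon> * coordmap N1 k m (perturb t) a + complex_of_real \<sigma> * coordmap N1 k m (perturb t) b) c \<noteq> 0"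
proof (rule eventually_gden_ne_0[OF _ _ c])
  show "complex_of_real \<epsilon> * coordmap N1 k m (perturb t) a + complex_of_real \<sigma> * coordmap N1 k m (perturb t) b =
      (complex_of_real \<epsilon> * coordmap N1 k m x a + complex_of_real \<sigma> * coordmap N1 k m x b)
      + complex_of_real (t * (\<epsilon> * real a + \<sigma> * real b))" for t
    unfolding coordmap_perturb[OF a] coordmap_perturb[OF b] by (simp add: algebra_simps)
  have "real a \<noteq> real b" "real a \<ge> 1" "real b \<ge> 1" using ab a b by auto
  then show "\<epsilon> * real a + \<sigma> * real b \<noteq> 0" using \<epsilon> \<sigma> by auto
qed

lemma eventually_gden_coords_minus:
  assumes "a \<in> {1..N1 + m}" "b \<in> {1..N1 + m}" "a \<noteq> b" "\<epsilon> \<in> {1, -1::real}" "c \<noteq> 0"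
  shows "\<forall>\<^sub>F t in at_right 0. gden (complex_of_real \<epsilon> * coordmap N1 k m (perturb t) a - coordmap N1 k m (perturb t) b) c \<noteq> 0"
  using eventually_gden_coords[OF assms(1-4), of "-1"] assms(5) by simp

lemma eventually_gden_coords_plus:
  assumes "a \<in> {1..N1 + m}" "b \<in> {1..N1 + m}" "a \<noteq> b" "\<epsilon> \<in> {1, -1::real}" "c \<noteq> 0"
  shows "\<forall>\<^sub>F t in at_right 0. gden (complex_of_real \<epsilon> * coordmap N1 k m (perturb t) a + coordmap N1 k m (perturb t) b) c \<noteq> 0"
  using eventually_gden_coords[OF assms(1-4), of 1] assms(5) by simp

lemma eventually_coords_single:
  assumes a: "a \<in> {1..N1 + m}" and \<epsilon>: "\<epsilon> \<in> {1, -1::real}"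
  shows "\<forall>\<^sub>F t in at_right 0. 1 - C * exp (2 * complex_of_real \<epsilon> * coordmap N1 k m (perturb t) a) \<noteq> 0"
proof (rule eventually_one_minus_exp_ne_0)
  show "2 * complex_of_real \<epsilon> * coordmap N1 k m (perturb t) a
      = 2 * complex_of_real \<epsilon> * coordmap N1 k m x a + complex_of_real (t * (2 * \<epsilon> * real a))" for t
    unfolding coordmap_perturb[OF a] by (simp add: algebra_simps)
  show "2 * \<epsilon> * real a \<noteq> 0" using \<epsilon> a by auto
qed

lemma eventually_coords_single_1:
  assumes "a \<in> {1..N1 + m}" and "\<epsilon> \<in> {1, -1::real}"
  shows "\<forall>\<^sub>F t in at_right 0. 1 - exp (2 * complex_of_real \<epsilon> * coordmap N1 k m (perturb t) a) \<noteq> 0"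
  using eventually_coords_single[OF assms, of 1] by simp

lemma eventually_gk_regular: "\<forall>\<^sub>F t in at_right 0. gk_regular N1 m hb \<eta> (coordmap N1 k m (perturb t))"
  unfolding gk_regular_def Let_def
proof (intro eventually_conj eventually_ball_finite ballI finite_atLeastAtMost finite.intros finite_Diff)
qed (rule eventually_gden_coords_minus eventually_gden_coords_plus eventually_coords_single
        eventually_coords_single_1; auto)+

lemma regular_points_near:
  "\<forall>\<epsilon>>0. \<exists>x'\<in>D0 n (S0_blocks N1 k m) \<eta>.
        koorn_regular n hb x' \<and> gk_regular N1 m hb \<eta> (coordmap N1 k m x') \<and>
        (\<forall>j\<in>{1..n}. cmod (x' j - x j) < \<epsilon>)"
proof (intro allI impI)
  fix \<epsilon> :: real assume \<epsilon>: "\<epsilon> > 0"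
  define \<delta> where "\<delta> = \<epsilon> / (real (N1 + m) + 1)"
  have \<delta>: "\<delta> > 0" using \<epsilon> by (simp add: \<delta>_def)
  have "\<forall>\<^sub>F t in at_right 0. t \<in> {0<..<\<delta>} \<and> koorn_regular n hb (perturb t)
                              \<and> gk_regular N1 m hb \<eta> (coordmap N1 k m (perturb t))"
    by (intro eventually_conj eventually_at_right_real \<delta> eventually_koorn_regular eventually_gk_regular)
  then obtain t where t: "t \<in> {0<..<\<delta>}" "koorn_regular n hb (perturb t)"
      "gk_regular N1 m hb \<eta> (coordmap N1 k m (perturb t))"
    using eventually_happens'[OF trivial_limit_at_right_real] by blast
  have "cmod (perturb t j - x j) < \<epsilon>" if j: "j \<in> {1..n}" for j
  proof -
    have "cmod (perturb t j - x j) = \<bar>t * weight j\<bar>"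
      unfolding perturb_def by (simp only: add_diff_cancel_left' norm_of_real)
    also have "\<dots> = t * weight j"
      using t(1) weight_pos[OF j] by simp
    also have "\<dots> \<le> \<delta> * real (N1 + m)"
      using t(1) weight_le[OF j] weight_pos[OF j] by (intro mult_mono) auto
    also have "\<dots> < \<epsilon>" using \<delta> \<epsilon> by (simp add: \<delta>_def field_simps)
    finally show ?thesis .
  qed
  then show "\<exists>x'\<in>D0 n (S0_blocks N1 k m) \<eta>. koorn_regular n hb x' \<and> gk_regular N1 m hb \<eta> (coordmap N1 k m x') \<and>
        (\<forall>j\<in>{1..n}. cmod (x' j - x j) < \<epsilon>)"
    using perturb_in_D0 t by blast
qed

end

context koornwinder_restriction
begin

lemma regular_points_dense:
  assumes x: "x \<in> D0 n (S0_blocks N1 k m) \<eta>"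
  shows "\<forall>\<epsilon>>0. \<exists>x'\<in>D0 n (S0_blocks N1 k m) \<eta>.
        koorn_regular n hb x' \<and> gk_regular N1 m hb \<eta> (coordmap N1 k m x') \<and>
        (\<forall>j\<in>{1..n}. cmod (x' j - x j) < \<epsilon>)"
proof -
  interpret perturbation N1 k m n \<eta> hb t1 x
    using x by unfold_locales
  show ?thesis by (rule regular_points_near)
qed

end

theorem mainTheorem18:
  fixes k m N1 n :: nat and \<eta>1 hb t0 t1 tn u0 un :: complex
  assumes "k \<ge> 2" and "m \<ge> 1" and "n = N1 + m * k"
    and "hb = of_nat k * \<eta>1"
    and "\<forall>r\<in>(\<rat>::real set). hb \<noteq> \<i> * complex_of_real (pi * r)"
    and "t1 = exp (\<eta>1 / 2)"
    and "t0 \<noteq> 0" and "tn \<noteq> 0" and "u0 \<noteq> 0" and "un \<noteq> 0"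
  shows
   "(\<forall>x\<in>D0 n (S0_blocks N1 k m) \<eta>1. \<forall>\<epsilon>>0. \<exists>x'\<in>D0 n (S0_blocks N1 k m) \<eta>1.
        koorn_regular n hb x' \<and> gk_regular N1 m hb \<eta>1 (coordmap N1 k m x') \<and>
        (\<forall>j\<in>{1..n}. cmod (x' j - x j) < \<epsilon>)) \<and>
    (\<forall>x\<in>D0 n (S0_blocks N1 k m) \<eta>1.
       koorn_regular n hb x \<and> gk_regular N1 m hb \<eta>1 (coordmap N1 k m x) \<longrightarrow>
       (\<forall>lam'\<in>Vbar n (S0_blocks N1 k m).
          restrict_coeff n (S0_blocks N1 k m) (koorn_supp n) (koorn_op n hb t0 t1 tn u0 un) lam' x =
          inverse (t0 * tn) *
            gk_op N1 m hb \<eta>1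
              (t0 * u0 * inverse (exp (hb / 2))) (- (t0 * inverse u0 * inverse (exp (hb / 2))))
              (tn * un) (- (tn * inverse un))
              (coordmap N1 k m (\<lambda>j. hb * complex_of_real (lam' j))) (coordmap N1 k m x)
          + (if lam' = (\<lambda>_. 0) then kappa_t n t0 t1 tn else 0)))"
proof -
  interpret koornwinder_restriction N1 k m n \<eta>1 hb t1
    by unfold_locales (use assms in auto)
  show ?thesis
    by (intro conjI ballI impI regular_points_dense restriction_coeff_eq) auto
qed

end
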